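(* There exist an absolute constant $c>0$ and a function $N(d,\varepsilon)=\tilde\Theta(\sqrt d/\varepsilon)$ such that for every $d\in\mathbb N$, every $\varepsilon\in(0,1]$, every $n\le N(d,\varepsilon)$, and all $\eta\ge1$, $\alpha\in[0,1]$ with $\eta\alpha<1/2$, there is no $(\varepsilon,\delta)$-DP mechanism with $\delta\le c/n$ for $\textsc{1-Way-Marginals}(n,d)$ that is $(\eta,\alpha,1/75)$-accurate. In particular, no such mechanism is $(\eta,\alpha)$-accurate.
   Context: $\textsc{1-Way-Marginals}(n,d)$: on a private $Y\in\{0,1\}^{n\times d}$ output estimates $a_j$ of $\frac1n\sum_iY_{i,j}$, $j\in[d]$; neighboring inputs differ in a single row. A mechanism $\mathcal M$ is $(\varepsilon,\delta)$-DP if $\Pr[\mathcal M(Y)\in S]\le e^\varepsilon\Pr[\mathcal M(Y')\in S]+\delta$ for all neighbors $Y,Y'$ and all $S$. An output is $(\eta,\alpha,\beta)$-accurate for $Y$ if $\frac1\eta\cdot\frac1n\sum_iY_{i,j}-\alpha\le a_j\le\eta\cdot\frac1n\sum_iY_{i,j}+\alpha$ for at least a $(1-\beta)$ fraction of columns $j$; $(\eta,\alpha)$-accurate means $(\eta,\alpha,0)$-accurate. A mechanism is $(\eta,\alpha,\beta)$-accurate if for every $Y$ its output is $(\eta,\alpha,\beta)$-accurate with probability at least $2/3$. $\tilde\Theta$ hides polylogarithmic factors in $d$. *)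

theory Defs
  imports "HOL-Probability.Probability"
begin

text \<open>A dataset Y in {0,1}^(n x d) is represented as a function nat => nat => bool
  which is False outside the index range [0,n) x [0,d).\<close>
definition datasets :: "nat \<Rightarrow> nat \<Rightarrow> (nat \<Rightarrow> nat \<Rightarrow> bool) set" where
  "datasets n d = {Y. \<forall>i j. (n \<le> i \<or> d \<le> j) \<longrightarrow> \<not> Y i j}"

definition neighbors :: "nat \<Rightarrow> nat \<Rightarrow> (nat \<Rightarrow> nat \<Rightarrow> bool) \<Rightarrow> (nat \<Rightarrow> nat \<Rightarrow> bool) \<Rightarrow> bool" where
  "neighbors n d Y Y' \<longleftrightarrow> Y \<in> datasets n d \<and> Y' \<in> datasets n d \<and>
     (\<exists>i<n. \<forall>i'. i' \<noteq> i \<longrightarrow> (\<forall>j. Y i' j = Y' i' j))"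

definition out_space :: "nat \<Rightarrow> (nat \<Rightarrow> real) measure" where
  "out_space d = PiM {..<d} (\<lambda>_. borel)"

definition is_mechanism :: "nat \<Rightarrow> nat \<Rightarrow> ((nat \<Rightarrow> nat \<Rightarrow> bool) \<Rightarrow> (nat \<Rightarrow> real) measure) \<Rightarrow> bool" where
  "is_mechanism n d M \<longleftrightarrow> (\<forall>Y\<in>datasets n d. prob_space (M Y) \<and> sets (M Y) = sets (out_space d))"

definition differentially_private ::
  "nat \<Rightarrow> nat \<Rightarrow> real \<Rightarrow> real \<Rightarrow> ((nat \<Rightarrow> nat \<Rightarrow> bool) \<Rightarrow> (nat \<Rightarrow> real) measure) \<Rightarrow> bool" where
  "differentially_private n d \<epsilon> \<delta> M \<longleftrightarrow>
     (\<forall>Y Y'. neighbors n d Y Y' \<longrightarrow>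
        (\<forall>S\<in>sets (out_space d). measure (M Y) S \<le> exp \<epsilon> * measure (M Y') S + \<delta>))"

definition col_mean :: "nat \<Rightarrow> (nat \<Rightarrow> nat \<Rightarrow> bool) \<Rightarrow> nat \<Rightarrow> real" where
  "col_mean n Y j = (1 / real n) * (\<Sum>i<n. if Y i j then 1 else 0)"

definition output_accurate ::
  "nat \<Rightarrow> nat \<Rightarrow> real \<Rightarrow> real \<Rightarrow> real \<Rightarrow> (nat \<Rightarrow> nat \<Rightarrow> bool) \<Rightarrow> (nat \<Rightarrow> real) \<Rightarrow> bool" where
  "output_accurate n d \<eta> \<alpha> \<beta> Y a \<longleftrightarrow>
     real (card {j\<in>{..<d}. (1/\<eta>) * col_mean n Y j - \<alpha> \<le> a j \<and> a j \<le> \<eta> * col_mean n Y j + \<alpha>})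
       \<ge> (1 - \<beta>) * real d"

definition mechanism_accurate ::
  "nat \<Rightarrow> nat \<Rightarrow> real \<Rightarrow> real \<Rightarrow> real \<Rightarrow> ((nat \<Rightarrow> nat \<Rightarrow> bool) \<Rightarrow> (nat \<Rightarrow> real) measure) \<Rightarrow> bool" where
  "mechanism_accurate n d \<eta> \<alpha> \<beta> M \<longleftrightarrow>
     (\<forall>Y\<in>datasets n d.
        measure (M Y) {a \<in> space (M Y). output_accurate n d \<eta> \<alpha> \<beta> Y a} \<ge> 2/3)"

end

theory Submission
  imports Defs
begin

text \<open>Rounding the output of an accurate mechanism at \<open>\<alpha>\<close> gives a private estimator of a bit
  vector \<open>u \<in> {0,1}\<^sup>d\<close> that on average gets at most \<open>26/75 \<cdot> d\<close> of the constant columns wrong.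
  Repeating every row \<open>m \<approx> 1/\<epsilon>\<close> times and using group privacy, we may assume \<open>\<epsilon> \<approx> 1\<close> at the
  cost of replacing \<open>n\<close> by \<open>\<lceil>n/m\<rceil> \<approx> n \<epsilon>\<close>.

  Now draw the data from a prior: column \<open>j\<close> gets a level \<open>k \<in> {0..K}\<close>, \<open>K = 10 n\<close>, and \<open>n\<close>
  independent bits of bias \<open>3 t\<^sup>2 - 2 t\<^sup>3\<close> at \<open>t = k/K\<close>.  Correlate the output with the increments
  of the likelihood-ratio martingale that moves every level up by one.  Summed over the rows the
  increments telescope, and the correlation becomes the discrete derivative in \<open>k\<close> of the
  probability of reporting \<open>1\<close>; as the estimator has to follow the constant columns at \<open>k = 0\<close>
  and \<open>k = K\<close>, the total is of order \<open>d/K\<close>.  On the other hand, once row \<open>i\<close> is erased the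
  output is uncorrelated with the \<open>i\<close>-th increments, so privacy, together with a second-moment
  bound on the increments, limits the share of row \<open>i\<close> to \<open>O((\<epsilon> \<surd>d + \<delta> d + 1)/K)\<close>.  Comparing
  the two bounds gives \<open>n \<epsilon> = \<Omega>(\<surd>d)\<close>.\<close>

lemma sum_PiE_remove_coord:
  assumes "finite J" "j \<in> J"
  shows "(\<Sum>\<omega>\<in>PiE J S. F \<omega>) = (\<Sum>\<rho>\<in>PiE (J - {j}) S. \<Sum>s\<in>S j. F (\<rho>(j := s)))"
proof -
  have "(\<Sum>\<omega>\<in>PiE J S. F \<omega>) = (\<Sum>\<omega>\<in>PiE (insert j (J - {j})) S. F \<omega>)"
    using assms by (simp add: insert_absorb)
  also have "\<dots> = (\<Sum>\<omega>\<in>(\<lambda>(y, g). g(j := y)) ` (S j \<times> PiE (J - {j}) S). F \<omega>)"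
    by (simp only: PiE_insert_eq)
  also have "\<dots> = (\<Sum>z\<in>S j \<times> PiE (J - {j}) S. F ((\<lambda>(y, g). g(j := y)) z))"
    by (rule sum.reindex[unfolded comp_def]) (rule inj_combinator, simp)
  also have "\<dots> = (\<Sum>s\<in>S j. \<Sum>\<rho>\<in>PiE (J - {j}) S. F (\<rho>(j := s)))"
    by (simp add: sum.cartesian_product case_prod_unfold)
  also have "\<dots> = (\<Sum>\<rho>\<in>PiE (J - {j}) S. \<Sum>s\<in>S j. F (\<rho>(j := s)))"
    by (rule sum.swap)
  finally show ?thesis .
qed

lemma prod_fun_upd_remove:
  assumes "finite J" "j \<in> J"
  shows "(\<Prod>j'\<in>J. D ((\<rho>(j := s)) j')) = D s * (\<Prod>j'\<in>J - {j}. D (\<rho> j'))"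
proof -
  have "(\<Prod>j'\<in>J - {j}. D ((\<rho>(j := s)) j')) = (\<Prod>j'\<in>J - {j}. D (\<rho> j'))"
    by (rule prod.cong) auto
  then show ?thesis
    using assms by (simp add: prod.remove)
qed

text \<open>In the following lemmas \<open>\<Prod>j\<in>J. D (\<omega> j)\<close> is the product probability on \<open>PiE J (\<lambda>_. Sc)\<close>
  with identical marginals \<open>D\<close>.\<close>

lemma sum_prod_weights_eq_1:
  fixes D :: "'b \<Rightarrow> real"
  assumes "finite J" "finite Sc" "sum D Sc = 1"
  shows "(\<Sum>\<omega>\<in>PiE J (\<lambda>_. Sc). \<Prod>j\<in>J. D (\<omega> j)) = 1"
  using prod_sum_PiE[of J "\<lambda>_. Sc" "\<lambda>_ s. D s"] assms by simp

lemma sum_prod_weights_split: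
  fixes D :: "'b \<Rightarrow> real"
  assumes "finite J" "j \<in> J"
  shows "(\<Sum>\<omega>\<in>PiE J (\<lambda>_. Sc). (\<Prod>j\<in>J. D (\<omega> j)) * G \<omega>) =
    (\<Sum>\<rho>\<in>PiE (J - {j}) (\<lambda>_. Sc). (\<Prod>j'\<in>J - {j}. D (\<rho> j')) * (\<Sum>s\<in>Sc. D s * G (\<rho>(j := s))))"
  by (subst sum_PiE_remove_coord[OF assms], rule sum.cong, simp, simp only: prod_fun_upd_remove[OF assms],
      simp add: sum_distrib_left mult_ac)

lemma sum_prod_weights_marginal:
  fixes D :: "'b \<Rightarrow> real"
  assumes "finite J" "j \<in> J" "finite Sc" "sum D Sc = 1"
  shows "(\<Sum>\<omega>\<in>PiE J (\<lambda>_. Sc). (\<Prod>j\<in>J. D (\<omega> j)) * F (\<omega> j)) = (\<Sum>s\<in>Sc. D s * F s)"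
proof -
  have "(\<Sum>\<rho>\<in>PiE (J - {j}) (\<lambda>_. Sc). \<Prod>j'\<in>J - {j}. D (\<rho> j')) = 1"
    using assms by (intro sum_prod_weights_eq_1) auto
  then show ?thesis
    by (subst sum_prod_weights_split[OF assms(1,2)]) (simp add: sum_distrib_right[symmetric])
qed

lemma sum_prod_weights_marginal2:
  fixes D :: "'b \<Rightarrow> real"
  assumes "finite J" "j \<in> J" "j' \<in> J" "j \<noteq> j'" "finite Sc" "sum D Sc = 1"
  shows "(\<Sum>\<omega>\<in>PiE J (\<lambda>_. Sc). (\<Prod>j\<in>J. D (\<omega> j)) * (F (\<omega> j) * G (\<omega> j'))) =
     (\<Sum>s\<in>Sc. D s * F s) * (\<Sum>s\<in>Sc. D s * G s)"
proof -
  have "(\<Sum>\<omega>\<in>PiE J (\<lambda>_. Sc). (\<Prod>j\<in>J. D (\<omega> j)) * (F (\<omega> j) * G (\<omega> j'))) =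
    (\<Sum>\<rho>\<in>PiE (J - {j}) (\<lambda>_. Sc). (\<Prod>j'\<in>J - {j}. D (\<rho> j')) * ((\<Sum>s\<in>Sc. D s * F s) * G (\<rho> j')))"
  proof (subst sum_prod_weights_split[OF assms(1,2)], rule sum.cong)
    fix \<rho>
    have "(\<Sum>s\<in>Sc. D s * (F ((\<rho>(j := s)) j) * G ((\<rho>(j := s)) j'))) = (\<Sum>s\<in>Sc. D s * F s) * G (\<rho> j')"
      using assms(4) by (simp add: sum_distrib_left sum_distrib_right mult.left_commute mult.commute)
    then show "(\<Prod>j'\<in>J - {j}. D (\<rho> j')) * (\<Sum>s\<in>Sc. D s * (F ((\<rho>(j := s)) j) * G ((\<rho>(j := s)) j'))) =
      (\<Prod>j'\<in>J - {j}. D (\<rho> j')) * ((\<Sum>s\<in>Sc. D s * F s) * G (\<rho> j'))" by simp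
  qed simp
  also have "\<dots> = (\<Sum>s\<in>Sc. D s * F s) * (\<Sum>\<rho>\<in>PiE (J - {j}) (\<lambda>_. Sc). (\<Prod>j'\<in>J - {j}. D (\<rho> j')) * G (\<rho> j'))"
    unfolding sum_distrib_left[of "\<Sum>s\<in>Sc. D s * F s"] by (rule sum.cong) (simp_all add: mult_ac)
  also have "(\<Sum>\<rho>\<in>PiE (J - {j}) (\<lambda>_. Sc). (\<Prod>j'\<in>J - {j}. D (\<rho> j')) * G (\<rho> j')) = (\<Sum>s\<in>Sc. D s * G s)"
    using assms by (intro sum_prod_weights_marginal) auto
  finally show ?thesis .
qed

lemma square_mean_le_mean_square:
  fixes w f :: "'a \<Rightarrow> real"
  assumes "finite S" "\<And>s. s \<in> S \<Longrightarrow> 0 \<le> w s" "sum w S = 1"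
  shows "(\<Sum>s\<in>S. w s * f s)^2 \<le> (\<Sum>s\<in>S. w s * (f s)^2)"
proof -
  have "(\<Sum>s\<in>S. sqrt (w s) * (sqrt (w s) * f s))^2 \<le> (\<Sum>s\<in>S. (sqrt (w s))^2) * (\<Sum>s\<in>S. (sqrt (w s) * f s)^2)"
    by (rule Cauchy_Schwarz_ineq_sum)
  moreover have "(\<Sum>s\<in>S. sqrt (w s) * (sqrt (w s) * f s)) = (\<Sum>s\<in>S. w s * f s)"
    using assms(2) by (intro sum.cong) (auto simp: mult.assoc[symmetric])
  moreover have "(\<Sum>s\<in>S. (sqrt (w s))^2) = 1" using assms by simp
  moreover have "(\<Sum>s\<in>S. (sqrt (w s) * f s)^2) = (\<Sum>s\<in>S. w s * (f s)^2)"
    using assms(2) by (intro sum.cong) (auto simp: power_mult_distrib)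
  ultimately show ?thesis by simp
qed

lemma sum_weighted_swap2:
  fixes w :: "'a \<Rightarrow> real"
  shows "(\<Sum>a\<in>A. w a * (\<Sum>b\<in>B. \<Sum>c\<in>C. f a b c)) = (\<Sum>b\<in>B. \<Sum>c\<in>C. \<Sum>a\<in>A. w a * f a b c)"
proof -
  have "(\<Sum>a\<in>A. w a * (\<Sum>b\<in>B. \<Sum>c\<in>C. f a b c)) = (\<Sum>a\<in>A. \<Sum>b\<in>B. \<Sum>c\<in>C. w a * f a b c)"
    by (simp add: sum_distrib_left)
  also have "\<dots> = (\<Sum>b\<in>B. \<Sum>a\<in>A. \<Sum>c\<in>C. w a * f a b c)" by (rule sum.swap)
  also have "\<dots> = (\<Sum>b\<in>B. \<Sum>c\<in>C. \<Sum>a\<in>A. w a * f a b c)"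
    by (rule sum.cong[OF refl]) (rule sum.swap)
  finally show ?thesis .
qed

lemma sum_weighted_swap3:
  fixes w :: "'a \<Rightarrow> real"
  shows "(\<Sum>a\<in>A. w a * (\<Sum>b\<in>B. g a b * (\<Sum>c\<in>C. f a b c))) = (\<Sum>c\<in>C. \<Sum>b\<in>B. \<Sum>a\<in>A. w a * (g a b * f a b c))"
proof -
  have "(\<Sum>a\<in>A. w a * (\<Sum>b\<in>B. g a b * (\<Sum>c\<in>C. f a b c))) = (\<Sum>a\<in>A. \<Sum>b\<in>B. \<Sum>c\<in>C. w a * (g a b * f a b c))"
    by (simp add: sum_distrib_left)
  also have "\<dots> = (\<Sum>b\<in>B. \<Sum>c\<in>C. \<Sum>a\<in>A. w a * (g a b * f a b c))"
    by (rule sum_weighted_swap2[where w = "\<lambda>_. 1", simplified])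
  also have "\<dots> = (\<Sum>c\<in>C. \<Sum>b\<in>B. \<Sum>a\<in>A. w a * (g a b * f a b c))" by (rule sum.swap)
  finally show ?thesis .
qed

lemma pos_part_le_square_div:
  fixes A T \<mu> g :: real
  assumes "0 < g" "g \<le> T - \<mu>"
  shows "max (A - T) 0 \<le> (A - \<mu>)^2 / g"
proof (cases "A \<le> T")
  case False
  then have "g \<le> A - \<mu>" using assms by linarith
  then have "A - \<mu> \<le> (A - \<mu>)^2 / g"
    using assms(1) by (simp add: le_divide_eq power2_eq_square mult_left_mono)
  then show ?thesis using False assms by linarith
qed (use assms in simp)

lemma exp_minus_1_le:
  fixes x :: real
  assumes "0 \<le> x" "x \<le> 1"
  shows "exp x - 1 \<le> 2 * x"
proof -
  have "exp x \<le> 1 + x + x^2" by (rule exp_bound) (use assms in auto)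
  moreover have "x^2 \<le> x" using assms by (simp add: power2_eq_square mult_left_le_one_le)
  ultimately show ?thesis by simp
qed

section \<open>Differential privacy on a finite output space\<close>

lemma dp_mean_le:
  fixes q q' h :: "'u \<Rightarrow> real"
  assumes "finite U" "\<And>R. R \<subseteq> U \<Longrightarrow> sum q R \<le> e * sum q' R + \<delta>"
    and "\<And>u. u \<in> U \<Longrightarrow> 0 \<le> h u" "\<And>u. u \<in> U \<Longrightarrow> h u \<le> T" "0 \<le> T"
  shows "(\<Sum>u\<in>U. q u * h u) \<le> e * (\<Sum>u\<in>U. q' u * h u) + \<delta> * T"
proof -
  define R where "R = {u\<in>U. q u > e * q' u}"
  have R: "finite R" "R \<subseteq> U" using assms(1) by (auto simp: R_def)
  have split: "(\<Sum>u\<in>U. g u) = (\<Sum>u\<in>R. g u) + (\<Sum>u\<in>U - R. g u)" for g :: "'u \<Rightarrow> real"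
    using sum.subset_diff[OF R(2) assms(1)] by (simp add: add.commute)
  have outside: "(\<Sum>u\<in>U - R. q u * h u) \<le> (\<Sum>u\<in>U - R. e * q' u * h u)"
    by (intro sum_mono mult_right_mono) (auto simp: R_def assms(3))
  have "(\<Sum>u\<in>R. (q u - e * q' u) * h u) \<le> (\<Sum>u\<in>R. (q u - e * q' u) * T)"
    by (intro sum_mono mult_left_mono) (auto simp: R_def assms(4))
  also have "\<dots> = T * (sum q R - e * sum q' R)"
    by (simp add: sum_distrib_right[symmetric] sum_subtractf sum_distrib_left[symmetric] mult.commute)
  also have "\<dots> \<le> T * \<delta>"
    using assms(2)[OF R(2)] assms(5) by (intro mult_left_mono) auto
  finally have inside: "(\<Sum>u\<in>R. q u * h u) \<le> T * \<delta> + (\<Sum>u\<in>R. e * q' u * h u)"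
    by (simp add: algebra_simps sum_subtractf)
  have "(\<Sum>u\<in>R. e * q' u * h u) + (\<Sum>u\<in>U - R. e * q' u * h u) = e * (\<Sum>u\<in>U. q' u * h u)"
    using split[of "\<lambda>u. e * q' u * h u"] by (simp add: sum_distrib_left mult_ac)
  then show ?thesis
    using split[of "\<lambda>u. q u * h u"] inside outside by (simp add: mult.commute)
qed

lemma exp_shift_le:
  fixes e a b c :: real
  assumes "1 \<le> e" "0 \<le> b" "0 \<le> c"
  shows "e * a - (b - c) / e \<le> (a - b) + (e - 1) * (a + b) + c"
proof -
  have "0 \<le> b * (e - 1)^2" using assms by simp
  moreover have "c * 1 \<le> c * e" by (rule mult_left_mono) (use assms in auto)
  ultimately have "e * (e * a) - (b - c) \<le> e * ((a - b) + (e - 1) * (a + b) + c)"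
    by (simp add: power2_eq_square algebra_simps)
  then show ?thesis using assms(1) by (simp add: field_simps)
qed

text \<open>Split \<open>\<phi>\<close> into its positive and negative parts, truncated at \<open>T\<close>, and apply
  \<open>dp_mean_le\<close> to each of them in the direction that makes the error terms add up.\<close>
lemma dp_mean_shift_le:
  fixes q q' \<phi> :: "'u \<Rightarrow> real"
  assumes fin: "finite U"
   and q0: "\<And>u. u\<in>U \<Longrightarrow> 0 \<le> q u" and q0': "\<And>u. u\<in>U \<Longrightarrow> 0 \<le> q' u"
   and s1: "sum q U = 1" and s1': "sum q' U = 1"
   and dp1: "\<And>R. R\<subseteq>U \<Longrightarrow> sum q R \<le> exp \<epsilon> * sum q' R + \<delta>"
   and dp2: "\<And>R. R\<subseteq>U \<Longrightarrow> sum q' R \<le> exp \<epsilon> * sum q R + \<delta>"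
   and ep: "0 \<le> \<epsilon>" and dl: "0 \<le> \<delta>" and T0: "0 \<le> T" and bnd: "\<And>u. u\<in>U \<Longrightarrow> \<bar>\<phi> u\<bar> \<le> A"
  shows "(\<Sum>u\<in>U. q u * \<phi> u) \<le> (\<Sum>u\<in>U. q' u * \<phi> u) + (exp \<epsilon> - 1) * (\<Sum>u\<in>U. q' u * \<bar>\<phi> u\<bar>)
           + 2 * \<delta> * T + 2 * max (A - T) 0"
proof -
  define hp where "hp u = min (max (\<phi> u) 0) T" for u
  define hm where "hm u = min (max (- \<phi> u) 0) T" for u
  define M where "M = max (A - T) 0"
  define a where "a = (\<Sum>u\<in>U. q' u * hp u)"
  define b where "b = (\<Sum>u\<in>U. q' u * hm u)"
  define e where "e = exp \<epsilon>"
  have upper: "\<phi> u \<le> hp u - hm u + M" and lower: "hp u - hm u \<le> \<phi> u + M" if "u \<in> U" for u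
    using bnd[OF that] T0 by (auto simp: hp_def hm_def M_def)
  have h: "hp u + hm u \<le> \<bar>\<phi> u\<bar>" "0 \<le> hp u" "0 \<le> hm u" "hp u \<le> T" "hm u \<le> T" for u
    using T0 by (auto simp: hp_def hm_def)
  have e1: "1 \<le> e" using ep by (simp add: e_def)
  have "(\<Sum>u\<in>U. q u * \<phi> u) \<le> (\<Sum>u\<in>U. q u * (hp u - hm u + M))"
    by (intro sum_mono mult_left_mono q0 upper)
  also have "\<dots> = (\<Sum>u\<in>U. q u * hp u) - (\<Sum>u\<in>U. q u * hm u) + M"
    using s1 by (simp add: algebra_simps sum.distrib sum_subtractf sum_distrib_left[symmetric])
  finally have split: "(\<Sum>u\<in>U. q u * \<phi> u) \<le> (\<Sum>u\<in>U. q u * hp u) - (\<Sum>u\<in>U. q u * hm u) + M" .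
  have pos: "(\<Sum>u\<in>U. q u * hp u) \<le> e * a + \<delta> * T"
    unfolding a_def e_def by (rule dp_mean_le[OF fin dp1]) (use h T0 in auto)
  have "b \<le> e * (\<Sum>u\<in>U. q u * hm u) + \<delta> * T"
    unfolding b_def e_def by (rule dp_mean_le[OF fin dp2]) (use h T0 in auto)
  then have neg: "(b - \<delta> * T) / e \<le> (\<Sum>u\<in>U. q u * hm u)"
    using e1 by (simp add: divide_le_eq mult.commute)
  have "e * a - (b - \<delta> * T) / e \<le> (a - b) + (e - 1) * (a + b) + \<delta> * T"
    using dl T0 q0' h by (intro exp_shift_le e1) (auto simp: b_def intro!: sum_nonneg)
  moreover have "a - b \<le> (\<Sum>u\<in>U. q' u * \<phi> u) + M"
  proof -
    have "a - b \<le> (\<Sum>u\<in>U. q' u * (\<phi> u + M))"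
      unfolding a_def b_def sum_subtractf[symmetric] right_diff_distrib[symmetric]
      by (intro sum_mono mult_left_mono q0' lower)
    then show ?thesis
      using s1' by (simp add: algebra_simps sum.distrib sum_distrib_left[symmetric])
  qed
  moreover have "(e - 1) * (a + b) \<le> (e - 1) * (\<Sum>u\<in>U. q' u * \<bar>\<phi> u\<bar>)"
    unfolding a_def b_def sum.distrib[symmetric] distrib_left[symmetric]
    using e1 by (intro mult_left_mono sum_mono q0' h) auto
  ultimately show ?thesis
    using split pos neg by (simp add: e_def M_def)
qed

definition bern :: "real \<Rightarrow> bool \<Rightarrow> real" where "bern p b = (if b then p else 1 - p)"

definition bitvecs :: "nat \<Rightarrow> (nat \<Rightarrow> bool) set" where "bitvecs n = PiE {..<n} (\<lambda>_. UNIV)"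

definition bern_vec :: "nat \<Rightarrow> real \<Rightarrow> (nat \<Rightarrow> bool) \<Rightarrow> real" where "bern_vec n p x = (\<Prod>i<n. bern p (x i))"

definition ones :: "nat \<Rightarrow> nat \<Rightarrow> bool" where "ones n = restrict (\<lambda>_. True) {..<n}"

definition zeros :: "nat \<Rightarrow> nat \<Rightarrow> bool" where "zeros n = restrict (\<lambda>_. False) {..<n}"

lemma bern_sum: "bern p True + bern p False = 1" by (simp add: bern_def)

lemma sum_UNIV_bool: "(\<Sum>b\<in>(UNIV::bool set). f b) = f True + f False"
  by (simp add: UNIV_bool add.commute)

lemma bern_nonneg: "0 \<le> p \<Longrightarrow> p \<le> 1 \<Longrightarrow> 0 \<le> bern p b" by (simp add: bern_def)

lemma finite_bitvecs[simp]: "finite (bitvecs n)" by (simp add: bitvecs_def finite_PiE)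

lemma ones_bitvecs[simp]: "ones n \<in> bitvecs n" by (simp add: ones_def bitvecs_def)

lemma zeros_bitvecs[simp]: "zeros n \<in> bitvecs n" by (simp add: zeros_def bitvecs_def)

lemma bitvecs_eq_ones: "x \<in> bitvecs n \<Longrightarrow> (\<forall>i<n. x i) \<longleftrightarrow> x = ones n"
  by (auto simp: bitvecs_def ones_def PiE_def extensional_def fun_eq_iff)

lemma bitvecs_eq_zeros: "x \<in> bitvecs n \<Longrightarrow> (\<forall>i<n. \<not> x i) \<longleftrightarrow> x = zeros n"
  by (auto simp: bitvecs_def zeros_def PiE_def extensional_def fun_eq_iff)

lemma sum_bern_vec: "(\<Sum>x\<in>bitvecs n. bern_vec n p x) = 1"
  using prod_sum_PiE[of "{..<n}" "\<lambda>_. UNIV" "\<lambda>_ b. bern p b"]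
  by (simp add: bitvecs_def bern_vec_def sum_UNIV_bool bern_sum)

lemma bern_vec_nonneg: "0 \<le> p \<Longrightarrow> p \<le> 1 \<Longrightarrow> 0 \<le> bern_vec n p x"
  unfolding bern_vec_def by (intro prod_nonneg) (simp add: bern_nonneg)

lemma bern_vec_zeros: "bern_vec n p (zeros n) = (1-p)^n" by (simp add: bern_vec_def bern_def zeros_def)

lemma bern_vec_ones: "bern_vec n p (ones n) = p^n" by (simp add: bern_vec_def bern_def ones_def)

lemma bern_vec_1: "x \<in> bitvecs n \<Longrightarrow> bern_vec n 1 x = (if x = ones n then 1 else 0)"
proof -
  assume x: "x \<in> bitvecs n"
  have "bern_vec n 1 x = (\<Prod>i<n. if x i then 1 else 0)" unfolding bern_vec_def by (rule prod.cong) (auto simp: bern_def)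
  also have "\<dots> = (if \<forall>i<n. x i then 1 else 0)"
    by (auto simp: prod_zero_iff)
  finally show ?thesis using bitvecs_eq_ones[OF x] by simp
qed

lemma bern_vec_0: "x \<in> bitvecs n \<Longrightarrow> bern_vec n 0 x = (if x = zeros n then 1 else 0)"
proof -
  assume x: "x \<in> bitvecs n"
  have "bern_vec n 0 x = (\<Prod>i<n. if x i then 0 else 1)" unfolding bern_vec_def by (rule prod.cong) (auto simp: bern_def)
  also have "\<dots> = (if \<forall>i<n. \<not> x i then 1 else 0)"
    by (auto simp: prod_zero_iff)
  finally show ?thesis using bitvecs_eq_zeros[OF x] by simp
qed

lemma sum_bern_vec_1: "(\<Sum>x\<in>bitvecs n. bern_vec n 1 x * G x) = G (ones n)"
proof -
  have "(\<Sum>x\<in>bitvecs n. bern_vec n 1 x * G x) = (\<Sum>x\<in>bitvecs n. if x = ones n then G x else 0)"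
    by (rule sum.cong) (auto simp: bern_vec_1)
  also have "\<dots> = G (ones n)" by (simp add: sum.delta')
  finally show ?thesis .
qed

lemma sum_bern_vec_0: "(\<Sum>x\<in>bitvecs n. bern_vec n 0 x * G x) = G (zeros n)"
proof -
  have "(\<Sum>x\<in>bitvecs n. bern_vec n 0 x * G x) = (\<Sum>x\<in>bitvecs n. if x = zeros n then G x else 0)"
    by (rule sum.cong) (auto simp: bern_vec_0)
  also have "\<dots> = G (zeros n)" by (simp add: sum.delta')
  finally show ?thesis .
qed

lemma bern_vec_mean_le:
  assumes "0 \<le> p" "p \<le> 1" "\<And>x. x \<in> bitvecs n \<Longrightarrow> 0 \<le> G x \<and> G x \<le> 1"
  shows "(\<Sum>x\<in>bitvecs n. bern_vec n p x * G x) \<le> G (zeros n) + real n * p"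
proof -
  have split: "(\<Sum>x\<in>bitvecs n. bern_vec n p x * G x) = bern_vec n p (zeros n) * G (zeros n) + (\<Sum>x\<in>bitvecs n - {zeros n}. bern_vec n p x * G x)"
    by (subst sum.remove[of _ "zeros n"]) auto
  have "(\<Sum>x\<in>bitvecs n - {zeros n}. bern_vec n p x * G x) \<le> (\<Sum>x\<in>bitvecs n - {zeros n}. bern_vec n p x)"
    using assms by (intro sum_mono) (auto intro: mult_right_le_one_le bern_vec_nonneg)
  also have "\<dots> = 1 - bern_vec n p (zeros n)" using sum_bern_vec[of n p] sum.remove[of "bitvecs n" "zeros n" "bern_vec n p"] by simp
  finally have A: "(\<Sum>x\<in>bitvecs n - {zeros n}. bern_vec n p x * G x) \<le> 1 - (1-p)^n" by (simp add: bern_vec_zeros)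
  have B: "(1-p)^n * G (zeros n) \<le> G (zeros n)"
    using assms(1,2) assms(3)[of "zeros n"] by (intro mult_left_le_one_le) (auto simp: power_le_one)
  have C: "1 + real n * (-p) \<le> (1 + (-p))^n" using assms by (intro Bernoulli_inequality) simp
  show ?thesis using split A B C by (simp add: bern_vec_zeros)
qed

lemma bern_vec_mean_ge:
  assumes "0 \<le> p" "p \<le> 1" "\<And>x. x \<in> bitvecs n \<Longrightarrow> 0 \<le> G x \<and> G x \<le> 1"
  shows "(\<Sum>x\<in>bitvecs n. bern_vec n p x * G x) \<ge> G (ones n) - real n * (1 - p)"
proof -
  have split: "(\<Sum>x\<in>bitvecs n. bern_vec n p x * G x) = bern_vec n p (ones n) * G (ones n) + (\<Sum>x\<in>bitvecs n - {ones n}. bern_vec n p x * G x)"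
    by (subst sum.remove[of _ "ones n"]) auto
  have A: "0 \<le> (\<Sum>x\<in>bitvecs n - {ones n}. bern_vec n p x * G x)"
    using assms by (intro sum_nonneg mult_nonneg_nonneg bern_vec_nonneg) auto
  have C: "1 + real n * (p - 1) \<le> (1 + (p - 1))^n" using assms by (intro Bernoulli_inequality) simp
  have G1: "G (ones n) \<le> 1" "0 \<le> G (ones n)" using assms(3)[of "ones n"] by auto
  have "p^n * G (ones n) \<ge> G (ones n) - (1 - p^n)"
  proof -
    have "G (ones n) - p^n * G (ones n) = (1 - p^n) * G (ones n)" by (simp add: algebra_simps)
    also have "\<dots> \<le> 1 - p^n" using G1 assms by (intro mult_left_le) (auto simp: power_le_one)
    finally show ?thesis by simp
  qed
  then show ?thesis using split A C by (simp add: bern_vec_ones algebra_simps)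
qed

lemma sum_bern_vec_centered:
  assumes "i < n" and z: "(\<Sum>b\<in>UNIV. bern p b * f b) = 0"
  shows "(\<Sum>x\<in>bitvecs n. bern_vec n p x * (f (x i) * G (x(i := False)))) = 0"
proof -
  have "(\<Sum>x\<in>bitvecs n. bern_vec n p x * (f (x i) * G (x(i := False)))) =
    (\<Sum>y\<in>PiE ({..<n} - {i}) (\<lambda>_. UNIV). \<Sum>b\<in>UNIV. bern_vec n p (y(i:=b)) * (f b * G (y(i := False))))"
    unfolding bitvecs_def using assms by (subst sum_PiE_remove_coord[of _ i]) auto
  also have "\<dots> = (\<Sum>y\<in>PiE ({..<n} - {i}) (\<lambda>_. UNIV). (\<Prod>i'\<in>{..<n} - {i}. bern p (y i')) * G (y(i := False)) * (\<Sum>b\<in>UNIV. bern p b * f b))"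
  proof (rule sum.cong)
    fix y
    show "(\<Sum>b\<in>UNIV. bern_vec n p (y(i:=b)) * (f b * G (y(i := False)))) =
      (\<Prod>i'\<in>{..<n} - {i}. bern p (y i')) * G (y(i := False)) * (\<Sum>b\<in>UNIV. bern p b * f b)"
    proof -
      have eq: "bern_vec n p (y(i:=b)) = bern p b * (\<Prod>i'\<in>{..<n} - {i}. bern p (y i'))" for b
        unfolding bern_vec_def by (rule prod_fun_upd_remove) (use assms in auto)
      show ?thesis by (simp add: eq sum_UNIV_bool algebra_simps)
    qed
  qed simp
  also have "\<dots> = 0" using z by simp
  finally show ?thesis .
qed

lemma prod_piecewise:
  fixes A B :: "nat \<Rightarrow> real"
  assumes "i < n"
  shows "(\<Prod>i'<n. if i' < i then A i' else if i' = i then B i' else 1) = (\<Prod>i'<i. A i') * B i"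
  using assms
proof (induction n)
  case 0 then show ?case by simp
next
  case (Suc m)
  show ?case
  proof (cases "i < m")
    case True
    then show ?thesis using Suc by simp
  next
    case False
    then have "i = m" using Suc by simp
    moreover have "(\<Prod>i'<m. if i' < m then A i' else if i' = m then B i' else 1) = (\<Prod>i'<m. A i')"
      by (rule prod.cong) auto
    ultimately show ?thesis by simp
  qed
qed

section \<open>The fingerprinting prior\<close>

definition smoothstep :: "real \<Rightarrow> real" where "smoothstep t = 3*t^2 - 2*t^3"

definition bias :: "nat \<Rightarrow> nat \<Rightarrow> real" where "bias K k = smoothstep (real k / real K)"

lemma smoothstep_strict_01: "0 < t \<Longrightarrow> t < 1 \<Longrightarrow> 0 < smoothstep t \<and> smoothstep t < 1"
proof -
  assume t: "0 < t" "t < 1"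
  have "smoothstep t = t^2 * (3 - 2*t)" by (simp add: smoothstep_def power2_eq_square power3_eq_cube algebra_simps)
  moreover have "1 - smoothstep t = (1-t)^2 * (1 + 2*t)" by (simp add: smoothstep_def power2_eq_square power3_eq_cube algebra_simps)
  moreover have "0 < t^2 * (3 - 2*t)" using t by (intro mult_pos_pos) auto
  moreover have "0 < (1-t)^2 * (1 + 2*t)" using t by (intro mult_pos_pos) auto
  ultimately show ?thesis by linarith
qed

lemma smoothstep_reflect: "smoothstep (1 - u) = 1 - smoothstep u"
  by (simp add: smoothstep_def power2_eq_square power3_eq_cube algebra_simps)

lemma bias_0[simp]: "bias K 0 = 0" by (simp add: bias_def smoothstep_def)

lemma bias_K[simp]: "0 < K \<Longrightarrow> bias K K = 1" by (simp add: bias_def smoothstep_def)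

lemma bias_strict_01: "0 < k \<Longrightarrow> k < K \<Longrightarrow> 0 < bias K k \<and> bias K k < 1"
  unfolding bias_def by (rule smoothstep_strict_01) (auto simp: field_simps)

lemma bias_01: "k \<le> K \<Longrightarrow> 0 \<le> bias K k \<and> bias K k \<le> 1"
  using bias_strict_01[of k K] by (cases "k = 0"; cases "k = K") auto

lemma bias_reflect: assumes "0 < K" shows "1 - bias K (K - 1) = bias K 1"
proof -
  have "real (K - 1) / real K = 1 - 1 / real K" using assms by (simp add: of_nat_diff field_simps)
  then have "bias K (K - 1) = smoothstep (1 - 1 / real K)" by (simp add: bias_def)
  then show ?thesis by (simp add: smoothstep_reflect bias_def)
qed

lemma bias_1_le: assumes "0 < K" shows "bias K 1 \<le> 3 / (real K)^2"
proof -
  have "bias K 1 = 3 / (real K)^2 - 2 / (real K)^3" by (simp add: bias_def smoothstep_def power_divide)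
  moreover have "0 \<le> 2 / (real K)^3" by simp
  ultimately show ?thesis by linarith
qed

lemma smoothstep_increment_bounds:
  fixes t h :: real
  assumes h: "0 < h" "h \<le> t" "t + 2*h \<le> 1"
  shows "0 \<le> smoothstep (t+h) - smoothstep t \<and> smoothstep (t+h) - smoothstep t \<le> 12*h*(t*(1-t))"
proof -
  have eq: "smoothstep (t+h) - smoothstep t = h * (6*(t*(1-t)) + h*(3 - 6*t - 2*h))"
    by (simp add: smoothstep_def power2_eq_square power3_eq_cube algebra_simps)
  have hh: "h \<le> 2*(t*(1-t))"
  proof (cases "t \<le> 1/2")
    case True
    have "2*(t*(1-t)) - t = t*(1-2*t)" by (simp add: algebra_simps)
    moreover have "0 \<le> t*(1-2*t)" using True h by (intro mult_nonneg_nonneg) auto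
    ultimately show ?thesis using h by linarith
  next
    case False
    have "2*(t*(1-t)) - (1-t) = (1-t)*(2*t-1)" by (simp add: algebra_simps)
    moreover have "0 \<le> (1-t)*(2*t-1)" using False h by (intro mult_nonneg_nonneg) auto
    ultimately show ?thesis using h by linarith
  qed
  have b1: "h*(3 - 6*t - 2*h) \<le> 3*h" using h by (simp add: algebra_simps)
  have b2: "h*(3 - 6*t - 2*h) \<ge> -3*h"
  proof -
    have "3 - 6*t - 2*h \<ge> -3" using h by linarith
    then show ?thesis using h mult_left_mono[of "-3" "3 - 6*t - 2*h" h] by simp
  qed
  have "0 \<le> 6*(t*(1-t)) + h*(3 - 6*t - 2*h)" using b2 hh by linarith
  moreover have "6*(t*(1-t)) + h*(3 - 6*t - 2*h) \<le> 12*(t*(1-t))" using b1 hh by linarith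
  ultimately show ?thesis unfolding eq using h
    by (auto intro: mult_nonneg_nonneg simp: mult_left_mono mult.assoc)
qed

lemma smoothstep_variance_ge:
  fixes t :: real
  assumes "0 \<le> t" "t \<le> 1"
  shows "3*(t*(1-t))^2 \<le> smoothstep t * (1 - smoothstep t)"
proof -
  have "smoothstep t * (1 - smoothstep t) = (t*(1-t))^2 * ((3 - 2*t)*(1+2*t))"
    by (simp add: smoothstep_def power2_eq_square power3_eq_cube algebra_simps)
  moreover have "(3 - 2*t)*(1+2*t) \<ge> 3"
  proof -
    have "(3 - 2*t)*(1+2*t) = 3 + 4*(t*(1-t))" by (simp add: algebra_simps)
    moreover have "0 \<le> t*(1-t)" using assms by simp
    ultimately show ?thesis by linarith
  qed
  ultimately show ?thesis using mult_left_mono[of 3 "(3 - 2*t)*(1+2*t)" "(t*(1-t))^2"]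
    by (simp add: mult.commute)
qed

text \<open>One column of the hard instance is a pair \<open>(k, x)\<close>: a level \<open>k \<in> {0..K}\<close>, drawn with
  probability \<open>9/20\<close> at each endpoint and uniformly otherwise, and \<open>n\<close> independent bits \<open>x\<close> of
  bias \<open>smoothstep (k / K)\<close>.  At the endpoints the column is constant, so an accurate
  mechanism has to report it; the cubic \<open>smoothstep\<close> is flat at \<open>0\<close> and \<open>1\<close>, which keeps
  both \<open>bias K 1\<close> and the chi-square distance between adjacent interior levels of order \<open>1/K\<^sup>2\<close>.\<close>

definition interior_prob :: "nat \<Rightarrow> real" where "interior_prob K = 1/(10*(real K - 1))"

definition level_prob :: "nat \<Rightarrow> nat \<Rightarrow> real" where
  "level_prob K k = (if k = 0 \<or> k = K then 9/20 else interior_prob K)"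

definition interior_level :: "nat \<Rightarrow> nat \<Rightarrow> bool" where "interior_level K k \<longleftrightarrow> 1 \<le> k \<and> k + 2 \<le> K"

definition col_space :: "nat \<Rightarrow> nat \<Rightarrow> (nat \<times> (nat \<Rightarrow> bool)) set" where "col_space n K = {0..K} \<times> bitvecs n"

definition col_prob :: "nat \<Rightarrow> nat \<Rightarrow> nat \<times> (nat \<Rightarrow> bool) \<Rightarrow> real" where
  "col_prob n K s = level_prob K (fst s) * bern_vec n (bias K (fst s)) (snd s)"

lemma sum_level_prob: assumes "2 \<le> K" shows "(\<Sum>k\<in>{0..K}. level_prob K k) = 1"
proof -
  have split: "{0..K} = {0, K} \<union> {1..K-1}" using assms by auto
  have "(\<Sum>k\<in>{0..K}. level_prob K k) = (\<Sum>k\<in>{0, K}. level_prob K k) + (\<Sum>k\<in>{1..K-1}. level_prob K k)"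
    unfolding split by (rule sum.union_disjoint) (use assms in auto)
  also have "(\<Sum>k\<in>{0, K}. level_prob K k) = 9/10" using assms by (simp add: level_prob_def)
  also have "(\<Sum>k\<in>{1..K-1}. level_prob K k) = (\<Sum>k\<in>{1..K-1}. 1/(10*(real K - 1)))"
    by (rule sum.cong) (auto simp: level_prob_def interior_prob_def)
  also have "\<dots> = real (K - 1) / (10*(real K - 1))" by simp
  also have "\<dots> = 1/10" using assms by (simp add: of_nat_diff)
  finally show ?thesis by simp
qed

lemma level_prob_nonneg: "2 \<le> K \<Longrightarrow> 0 \<le> level_prob K k" by (simp add: level_prob_def interior_prob_def)

lemma level_prob_interior: "interior_level K k \<Longrightarrow> level_prob K k = interior_prob K"
  by (simp add: level_prob_def interior_level_def)

lemma sum_interior: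
  fixes f :: "nat \<Rightarrow> real"
  shows "(\<Sum>k\<in>{0..K}. if interior_level K k then f k else 0) = (\<Sum>k\<in>{1..K-2}. f k)"
proof -
  have "(\<Sum>k\<in>{0..K}. if interior_level K k then f k else 0) = (\<Sum>k\<in>{k\<in>{0..K}. interior_level K k}. f k)"
    by (rule sum.inter_filter[symmetric]) simp
  also have "{k\<in>{0..K}. interior_level K k} = {1..K-2}" by (auto simp: interior_level_def)
  finally show ?thesis .
qed

lemma finite_col_space[simp]: "finite (col_space n K)" by (simp add: col_space_def)

lemma sum_col_prob_levels:
  "(\<Sum>s\<in>col_space n K. col_prob n K s * F s) =
    (\<Sum>k\<in>{0..K}. level_prob K k * (\<Sum>x\<in>bitvecs n. bern_vec n (bias K k) x * F (k, x)))"
  unfolding col_space_def col_prob_def by (simp add: sum.cartesian_product split_def mult.assoc sum_distrib_left)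

lemma sum_col_prob: assumes "2 \<le> K" shows "(\<Sum>s\<in>col_space n K. col_prob n K s) = 1"
  using sum_col_prob_levels[of n K "\<lambda>_. 1"] by (simp add: sum_bern_vec sum_level_prob[OF assms])

lemma col_prob_nonneg: assumes "2 \<le> K" "s \<in> col_space n K" shows "0 \<le> col_prob n K s"
  using assms bias_01[of "fst s" K] unfolding col_prob_def col_space_def
  by (intro mult_nonneg_nonneg level_prob_nonneg bern_vec_nonneg) auto

lemma col_prob_top_level:
  assumes "2 \<le> K"
  shows "(\<Sum>s\<in>col_space n K. col_prob n K s * ((if fst s = K then 1 else 0) * G (snd s))) = 9/20 * G (ones n)"
proof -
  have "(\<Sum>s\<in>col_space n K. col_prob n K s * ((if fst s = K then 1 else 0) * G (snd s))) =
     (\<Sum>k\<in>{0..K}. if k = K then level_prob K K * (\<Sum>x\<in>bitvecs n. bern_vec n 1 x * G x) else 0)"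
    unfolding sum_col_prob_levels by (rule sum.cong) (use assms in auto)
  also have "\<dots> = 9/20 * G (ones n)" by (simp add: sum_bern_vec_1 level_prob_def)
  finally show ?thesis .
qed

lemma col_prob_bottom_level:
  assumes "2 \<le> K"
  shows "(\<Sum>s\<in>col_space n K. col_prob n K s * ((if fst s = 0 then 1 else 0) * G (snd s))) = 9/20 * G (zeros n)"
proof -
  have "(\<Sum>s\<in>col_space n K. col_prob n K s * ((if fst s = 0 then 1 else 0) * G (snd s))) =
     (\<Sum>k\<in>{0..K}. if k = 0 then level_prob K 0 * (\<Sum>x\<in>bitvecs n. bern_vec n 0 x * G x) else 0)"
    unfolding sum_col_prob_levels by (rule sum.cong) auto
  also have "\<dots> = 9/20 * G (zeros n)" by (simp add: sum_bern_vec_0 level_prob_def)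
  finally show ?thesis .
qed

section \<open>Likelihood ratios between adjacent levels\<close>

definition lr :: "nat \<Rightarrow> nat \<Rightarrow> bool \<Rightarrow> real" where "lr K k b = bern (bias K (Suc k)) b / bern (bias K k) b"

lemma bern_lr: assumes "0 < k" "Suc k < K" shows "bern (bias K k) b * lr K k b = bern (bias K (Suc k)) b"
  using bias_strict_01[of k K] assms by (cases b) (auto simp: lr_def bern_def)

lemma lr_centered_mean: assumes "0 < k" "Suc k < K" shows "(\<Sum>b\<in>UNIV. bern (bias K k) b * (lr K k b - 1)) = 0"
  using bern_lr[OF assms, of True] bern_lr[OF assms, of False]
  by (simp add: sum_UNIV_bool algebra_simps bern_def)

definition chi2 :: "nat \<Rightarrow> nat \<Rightarrow> real" where
  "chi2 K k = (\<Sum>b\<in>UNIV. bern (bias K k) b * (lr K k b - 1)^2)"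

lemma chi2_le:
  assumes "interior_level K k"
  shows "chi2 K k \<le> 48 / (real K)^2"
proof -
  define t where "t = real k / real K"
  define h where "h = 1 / real K"
  have K0: "0 < real K" using assms by (simp add: interior_level_def)
  have th: "t + h = real (Suc k) / real K" by (simp add: t_def h_def add_divide_distrib)
  have hpos: "0 < h" "h \<le> t" "t + 2*h \<le> 1" using assms K0
    by (auto simp: t_def h_def interior_level_def field_simps)
  define p where "p = bias K k"
  define q where "q = bias K (Suc k)"
  have pq1: "p = smoothstep t" by (simp add: p_def bias_def t_def)
  have pq2: "q = smoothstep (t+h)" unfolding th by (simp add: q_def bias_def)
  note pq = pq1 pq2
  have p01: "0 < p" "p < 1" using bias_strict_01[of k K] assms by (auto simp: p_def interior_level_def)
  have sb: "0 \<le> q - p \<and> q - p \<le> 12*h*(t*(1-t))" using smoothstep_increment_bounds[OF hpos] pq by simp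
  have pvar: "3*(t*(1-t))^2 \<le> p * (1 - p)" using smoothstep_variance_ge[of t] hpos pq by simp
  have c: "chi2 K k = (q-p)^2 / (p*(1-p))"
  proof -
    have "chi2 K k = p * ((q/p) - 1)^2 + (1-p) * ((1-q)/(1-p) - 1)^2"
      by (simp add: chi2_def sum_UNIV_bool bern_def lr_def p_def q_def)
    also have "(q/p) - 1 = (q - p)/p" using p01 by (simp add: field_simps)
    also have "(1-q)/(1-p) - 1 = (p - q)/(1-p)" using p01 by (simp add: field_simps)
    also have "p * ((q - p)/p)^2 = (q-p)^2/p" using p01 by (simp add: power2_eq_square)
    also have "(1-p) * ((p - q)/(1-p))^2 = (q-p)^2/(1-p)"
    proof -
      have ne: "1 - p \<noteq> 0" using p01 by simp
      have "(1-p) * ((p - q)/(1-p))^2 = (1-p) * ((p-q)^2/(1-p)^2)" by (simp add: power_divide)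
      also have "\<dots> = (p-q)^2/(1-p)" using ne by (simp add: power2_eq_square)
      also have "(p-q)^2 = (q-p)^2" by (simp add: power2_commute)
      finally show ?thesis .
    qed
    also have "(q-p)^2/p + (q-p)^2/(1-p) = (q-p)^2 / (p*(1-p))" using p01 by (simp add: field_simps)
    finally show ?thesis .
  qed
  have "(q-p)^2 \<le> (12*h*(t*(1-t)))^2" using sb by (intro power_mono) auto
  also have "\<dots> = 48*h^2 * (3*(t*(1-t))^2)" by (simp add: power2_eq_square)
  also have "\<dots> \<le> 48*h^2 * (p*(1-p))" using pvar by (intro mult_left_mono) auto
  finally have "(q-p)^2 / (p*(1-p)) \<le> 48*h^2" using p01 by (simp add: divide_le_eq)
  then show ?thesis using c by (simp add: h_def power2_eq_square)
qed

lemma chi2_nonneg: "interior_level K k \<Longrightarrow> 0 \<le> chi2 K k"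
  unfolding chi2_def using bias_01[of k K] by (intro sum_nonneg mult_nonneg_nonneg bern_nonneg) (auto simp: interior_level_def)

lemma lr_square_mean:
  assumes "interior_level K k"
  shows "(\<Sum>b\<in>UNIV. bern (bias K k) b * (lr K k b)^2) = 1 + chi2 K k"
proof -
  have a: "0 < k" "Suc k < K" using assms by (auto simp: interior_level_def)
  have "(\<Sum>b\<in>UNIV. bern (bias K k) b * (lr K k b)^2) =
        chi2 K k + 2 * (\<Sum>b\<in>UNIV. bern (bias K k) b * lr K k b) - (\<Sum>b\<in>UNIV. bern (bias K k) b)"
    by (simp add: chi2_def sum_UNIV_bool power2_eq_square algebra_simps)
  also have "(\<Sum>b\<in>UNIV. bern (bias K k) b * lr K k b) = 1"
    using bern_lr[OF a] by (simp add: sum_UNIV_bool bern_sum)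
  finally show ?thesis by (simp add: sum_UNIV_bool bern_sum)
qed

text \<open>\<open>lr_incr K i (k, x)\<close> is the \<open>i\<close>-th increment of the likelihood-ratio martingale
  of the rows for moving the level from \<open>k\<close> to \<open>k + 1\<close>; the increments add up to \<open>lr_excess\<close>.
  Only levels with both biases strictly inside \<open>(0, 1)\<close> are used.\<close>

definition lr_incr :: "nat \<Rightarrow> nat \<Rightarrow> nat \<times> (nat \<Rightarrow> bool) \<Rightarrow> real" where
  "lr_incr K i s = (if interior_level K (fst s) then (\<Prod>i'<i. lr K (fst s) (snd s i')) * (lr K (fst s) (snd s i) - 1) else 0)"

definition lr_excess :: "nat \<Rightarrow> nat \<Rightarrow> nat \<times> (nat \<Rightarrow> bool) \<Rightarrow> real" where
  "lr_excess K n s = (if interior_level K (fst s) then (\<Prod>i<n. lr K (fst s) (snd s i)) - 1 else 0)"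

lemma sum_lr_incr: "(\<Sum>i<n. lr_incr K i s) = lr_excess K n s"
proof (cases "interior_level K (fst s)")
  case False then show ?thesis by (simp add: lr_incr_def lr_excess_def)
next
  case True
  have "(\<Sum>i<n. (\<Prod>i'<i. f i') * (f i - 1)) = (\<Prod>i<n. f i) - 1" for f :: "nat \<Rightarrow> real"
    by (induction n) (simp_all add: algebra_simps)
  then show ?thesis using True by (simp add: lr_incr_def lr_excess_def)
qed

lemma lr_incr_second_moment_level:
  assumes "interior_level K k" "i < n"
  shows "(\<Sum>x\<in>bitvecs n. bern_vec n (bias K k) x * (lr_incr K i (k, x))^2) = (1 + chi2 K k)^i * chi2 K k"
proof -
  define g where "g i' b = bern (bias K k) b * (if i' < i then (lr K k b)^2 else if i' = i then (lr K k b - 1)^2 else 1)" for i' b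
  have "(\<Prod>i'<n. \<Sum>b\<in>UNIV. g i' b) = (\<Sum>x\<in>bitvecs n. \<Prod>i'<n. g i' (x i'))"
    unfolding bitvecs_def by (rule prod_sum_PiE) auto
  moreover have "(\<Prod>i'<n. \<Sum>b\<in>UNIV. g i' b) = (1 + chi2 K k)^i * chi2 K k"
  proof -
    have "(\<Prod>i'<n. \<Sum>b\<in>UNIV. g i' b) = (\<Prod>i'<n. if i' < i then 1 + chi2 K k else if i' = i then chi2 K k else 1)"
    proof (rule prod.cong)
      fix i' assume "i' \<in> {..<n}"
      show "(\<Sum>b\<in>UNIV. g i' b) = (if i' < i then 1 + chi2 K k else if i' = i then chi2 K k else 1)"
      proof (cases "i' < i")
        case True then show ?thesis using lr_square_mean[OF assms(1)] by (simp add: g_def)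
      next
        case False
        then show ?thesis by (cases "i' = i") (simp_all add: g_def chi2_def sum_UNIV_bool bern_sum)
      qed
    qed simp
    also have "\<dots> = (\<Prod>i'<i. 1 + chi2 K k) * chi2 K k" by (rule prod_piecewise[OF assms(2)])
    finally show ?thesis by simp
  qed
  moreover have "(\<Prod>i'<n. g i' (x i')) = bern_vec n (bias K k) x * (lr_incr K i (k, x))^2" for x
  proof -
    have "(\<Prod>i'<n. g i' (x i')) = bern_vec n (bias K k) x * (\<Prod>i'<n. if i' < i then (lr K k (x i'))^2 else if i' = i then (lr K k (x i') - 1)^2 else 1)"
      unfolding g_def bern_vec_def by (simp add: prod.distrib)
    also have "(\<Prod>i'<n. if i' < i then (lr K k (x i'))^2 else if i' = i then (lr K k (x i') - 1)^2 else 1)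
        = (\<Prod>i'<i. (lr K k (x i'))^2) * (lr K k (x i) - 1)^2"
      by (rule prod_piecewise[OF assms(2)])
    also have "\<dots> = (lr_incr K i (k, x))^2" using assms(1) by (simp add: lr_incr_def power_mult_distrib prod_power_distrib)
    finally show ?thesis .
  qed
  ultimately show ?thesis by simp
qed

lemma one_plus_power_le_2:
  assumes "0 \<le> x" "x \<le> 48 / (real K)^2" "K = 10 * n" "i < n"
  shows "(1 + x)^i \<le> 2"
proof -
  have n1: "1 \<le> n" using assms by simp
  have "(1 + x)^i \<le> (exp x)^i" using assms by (intro power_mono) (auto simp: exp_ge_add_one_self add_increasing)
  also have "\<dots> = exp (real i * x)" by (simp add: exp_of_nat_mult)
  also have "real i * x \<le> 1/2"
  proof -
    have "real i * x \<le> real n * (48 / (real K)^2)" using assms by (intro mult_mono) auto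
    also have "\<dots> = 48 / (100 * real n)" using n1 by (simp add: assms(3) power2_eq_square)
    also have "\<dots> \<le> 1/2" using n1 by (simp add: field_simps)
    finally show ?thesis .
  qed
  hence "exp (real i * x) \<le> exp (1/2)" by simp
  also have "exp (1/2::real) \<le> 2"
  proof -
    have "(exp (1/2::real))^2 = exp 1" by (simp add: exp_double[symmetric] power2_eq_square exp_add[symmetric])
    also have "\<dots> \<le> 2^2" using exp_le by simp
    finally show ?thesis by (rule power2_le_imp_le) simp
  qed
  finally show ?thesis .
qed

lemma lr_incr_second_moment_le:
  assumes "K = 10 * n" "1 \<le> n" "i < n"
  shows "(\<Sum>s\<in>col_space n K. col_prob n K s * (lr_incr K i s)^2) \<le> 96 * interior_prob K / real K"
proof -
  have "(\<Sum>s\<in>col_space n K. col_prob n K s * (lr_incr K i s)^2) =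
    (\<Sum>k\<in>{0..K}. if interior_level K k then interior_prob K * ((1 + chi2 K k)^i * chi2 K k) else 0)"
    unfolding sum_col_prob_levels
  proof (rule sum.cong[OF refl])
    fix k
    show "level_prob K k * (\<Sum>x\<in>bitvecs n. bern_vec n (bias K k) x * (lr_incr K i (k, x))^2) =
      (if interior_level K k then interior_prob K * ((1 + chi2 K k)^i * chi2 K k) else 0)"
      by (cases "interior_level K k")
        (simp add: lr_incr_second_moment_level[OF _ assms(3)] level_prob_interior, simp add: lr_incr_def)
  qed
  also have "\<dots> = (\<Sum>k\<in>{1..K-2}. interior_prob K * ((1 + chi2 K k)^i * chi2 K k))" by (rule sum_interior)
  also have "\<dots> \<le> (\<Sum>k\<in>{1..K-2}. interior_prob K * (2 * (48 / (real K)^2)))"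
  proof (rule sum_mono)
    fix k assume "k \<in> {1..K-2}"
    then have ik: "interior_level K k" using assms by (auto simp: interior_level_def)
    have "(1 + chi2 K k)^i * chi2 K k \<le> 2 * (48 / (real K)^2)"
      using one_plus_power_le_2[OF chi2_nonneg[OF ik] chi2_le[OF ik] assms(1,3)] chi2_le[OF ik] chi2_nonneg[OF ik]
      by (intro mult_mono) auto
    then show "interior_prob K * ((1 + chi2 K k)^i * chi2 K k) \<le> interior_prob K * (2 * (48 / (real K)^2))"
      using assms by (intro mult_left_mono) (auto simp: interior_prob_def)
  qed
  also have "\<dots> = real (K - 2) * (interior_prob K * (96 / (real K)^2))" by simp
  also have "\<dots> \<le> real K * (interior_prob K * (96 / (real K)^2))"
    using assms by (intro mult_right_mono) (auto simp: interior_prob_def)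
  also have "\<dots> = 96 * interior_prob K / real K" using assms by (simp add: power2_eq_square)
  finally show ?thesis .
qed

lemma lr_incr_abs_moment_le:
  assumes "2 \<le> K"
  shows "(\<Sum>s\<in>col_space n K. col_prob n K s * \<bar>lr_incr K i s\<bar>) \<le> sqrt (\<Sum>s\<in>col_space n K. col_prob n K s * (lr_incr K i s)^2)"
proof -
  have "(\<Sum>s\<in>col_space n K. col_prob n K s * \<bar>lr_incr K i s\<bar>)^2 \<le> (\<Sum>s\<in>col_space n K. col_prob n K s * \<bar>lr_incr K i s\<bar>^2)"
    by (rule square_mean_le_mean_square) (use assms col_prob_nonneg sum_col_prob in auto)
  then show ?thesis by (intro real_le_rsqrt) simp
qed

lemma bern_vec_lr: assumes "interior_level K k"
  shows "bern_vec n (bias K k) x * (\<Prod>i<n. lr K k (x i)) = bern_vec n (bias K (Suc k)) x"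
proof -
  have a: "0 < k" "Suc k < K" using assms by (auto simp: interior_level_def)
  show ?thesis unfolding bern_vec_def prod.distrib[symmetric] using bern_lr[OF a] by simp
qed

lemma lr_excess_signal_ge:
  assumes "K = 10 * n" "1 \<le> n" and G: "\<And>x. x \<in> bitvecs n \<Longrightarrow> 0 \<le> G x \<and> G x \<le> 1"
  shows "(\<Sum>s\<in>col_space n K. col_prob n K s * (lr_excess K n s * G (snd s))) \<ge> interior_prob K * (G (ones n) - G (zeros n) - 2 * real n * bias K 1)"
proof -
  define h where "h k = (\<Sum>x\<in>bitvecs n. bern_vec n (bias K k) x * G x)" for k
  have level: "(\<Sum>x\<in>bitvecs n. bern_vec n (bias K k) x * (lr_excess K n (k, x) * G x)) = h (Suc k) - h k"
    if "interior_level K k" for k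
    using that by (simp add: lr_excess_def algebra_simps sum_subtractf h_def bern_vec_lr[OF that, symmetric])
  have "(\<Sum>s\<in>col_space n K. col_prob n K s * (lr_excess K n s * G (snd s))) =
    (\<Sum>k\<in>{0..K}. if interior_level K k then interior_prob K * (h (Suc k) - h k) else 0)"
    unfolding sum_col_prob_levels
  proof (rule sum.cong[OF refl])
    fix k
    show "level_prob K k * (\<Sum>x\<in>bitvecs n. bern_vec n (bias K k) x * (lr_excess K n (k, x) * G (snd (k, x)))) =
      (if interior_level K k then interior_prob K * (h (Suc k) - h k) else 0)"
      by (cases "interior_level K k") (simp add: level level_prob_interior, simp add: lr_excess_def)
  qed
  also have "\<dots> = (\<Sum>k\<in>{1..K-2}. interior_prob K * (h (Suc k) - h k))" by (rule sum_interior)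
  also have "\<dots> = interior_prob K * (h (Suc (K-2)) - h 1)"
    using assms by (simp add: sum_distrib_left[symmetric] sum_Suc_diff)
  also have "Suc (K - 2) = K - 1" using assms by simp
  finally have eq: "(\<Sum>s\<in>col_space n K. col_prob n K s * (lr_excess K n s * G (snd s))) = interior_prob K * (h (K - 1) - h 1)" .
  have K0: "0 < K" using assms by simp
  have hK: "h (K - 1) \<ge> G (ones n) - real n * bias K 1"
    using bern_vec_mean_ge[of "bias K (K-1)" n G] bias_01[of "K-1" K] G bias_reflect[OF K0] by (simp add: h_def)
  have h1: "h 1 \<le> G (zeros n) + real n * bias K 1"
    using bern_vec_mean_le[of "bias K 1" n G] bias_01[of 1 K] G assms by (simp add: h_def)
  have nu0: "0 \<le> interior_prob K" using assms by (simp add: interior_prob_def)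
  have "interior_prob K * (G (ones n) - G (zeros n) - 2 * real n * bias K 1) \<le> interior_prob K * (h (K - 1) - h 1)"
    using hK h1 nu0 by (intro mult_left_mono) auto
  then show ?thesis using eq by simp
qed

lemma lr_incr_factor:
  "lr_incr K i (k, x) = (if interior_level K k then (\<Prod>i'<i. lr K k ((x(i:=False)) i')) * (lr K k (x i) - 1) else 0)"
proof -
  have "(\<Prod>i'<i. lr K k ((x(i:=False)) i')) = (\<Prod>i'<i. lr K k (x i'))" by (rule prod.cong) auto
  then show ?thesis by (simp add: lr_incr_def)
qed

text \<open>The martingale property: a likelihood-ratio increment is uncorrelated with anything that
  does not look at the bit it was generated from.\<close>
lemma sum_col_prob_lr_incr_eq_0:
  assumes i: "i < n" and G: "\<And>k x. x \<in> bitvecs n \<Longrightarrow> G (k, x) = G (k, x(i := False))"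
  shows "(\<Sum>s\<in>col_space n K. col_prob n K s * (lr_incr K i s * G s)) = 0"
proof -
  have level: "(\<Sum>x\<in>bitvecs n. bern_vec n (bias K k) x * (lr_incr K i (k, x) * G (k, x))) = 0" for k
  proof (cases "interior_level K k")
    case True
    then have k: "0 < k" "Suc k < K" by (auto simp: interior_level_def)
    have "(\<Sum>x\<in>bitvecs n. bern_vec n (bias K k) x * (lr_incr K i (k, x) * G (k, x))) =
      (\<Sum>x\<in>bitvecs n. bern_vec n (bias K k) x *
         ((lr K k (x i) - 1) * ((\<lambda>y. (\<Prod>i'<i. lr K k (y i')) * G (k, y)) (x(i := False)))))"
      by (rule sum.cong) (auto simp: lr_incr_factor True G[of _ k] mult_ac)
    also have "\<dots> = 0" by (rule sum_bern_vec_centered[OF i lr_centered_mean[OF k]])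
    finally show ?thesis .
  qed (simp add: lr_incr_def)
  then show ?thesis by (simp add: sum_col_prob_levels)
qed

definition code_space :: "nat \<Rightarrow> nat \<Rightarrow> nat \<Rightarrow> (nat \<Rightarrow> nat \<times> (nat \<Rightarrow> bool)) set" where
  "code_space n K d = PiE {..<d} (\<lambda>_. col_space n K)"

definition code_prob :: "nat \<Rightarrow> nat \<Rightarrow> nat \<Rightarrow> (nat \<Rightarrow> nat \<times> (nat \<Rightarrow> bool)) \<Rightarrow> real" where
  "code_prob n K d om = (\<Prod>j<d. col_prob n K (om j))"

definition code_data :: "nat \<Rightarrow> nat \<Rightarrow> (nat \<Rightarrow> nat \<times> (nat \<Rightarrow> bool)) \<Rightarrow> nat \<Rightarrow> nat \<Rightarrow> bool" where
  "code_data n d om = (\<lambda>i j. i < n \<and> j < d \<and> snd (om j) i)"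

definition zero_row :: "nat \<Rightarrow> (nat \<Rightarrow> nat \<Rightarrow> bool) \<Rightarrow> nat \<Rightarrow> nat \<Rightarrow> bool" where
  "zero_row i Y = (\<lambda>i' j. if i' = i then False else Y i' j)"

definition const_col_errors :: "nat \<Rightarrow> nat \<Rightarrow> (nat \<Rightarrow> nat \<Rightarrow> bool) \<Rightarrow> (nat \<Rightarrow> bool) \<Rightarrow> nat" where
  "const_col_errors n d Y u = card {j\<in>{..<d}. ((\<forall>i<n. Y i j) \<and> \<not> u j) \<or> ((\<forall>i<n. \<not> Y i j) \<and> u j)}"

lemma finite_code_space[simp]: "finite (code_space n K d)"
  by (simp add: code_space_def finite_PiE)

lemma code_data_datasets: "code_data n d om \<in> datasets n d"
  by (auto simp: code_data_def datasets_def)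

lemma zero_row_datasets: "Y \<in> datasets n d \<Longrightarrow> zero_row i Y \<in> datasets n d"
  by (auto simp: zero_row_def datasets_def)

lemma neighbors_zero_row: "Y \<in> datasets n d \<Longrightarrow> i < n \<Longrightarrow> neighbors n d Y (zero_row i Y)"
  unfolding neighbors_def using zero_row_datasets by (auto simp: zero_row_def)

lemma neighbors_sym: "neighbors n d Y Y' \<Longrightarrow> neighbors n d Y' Y"
  unfolding neighbors_def by metis

lemma zero_row_code_data_fun_upd:
  "zero_row i (code_data n d (om(j := (k, x(i := False))))) = zero_row i (code_data n d (om(j := (k, x))))"
  by (auto simp: zero_row_def code_data_def fun_eq_iff)

lemma const_col_errors_le: "const_col_errors n d Y u \<le> d"
proof -
  have "const_col_errors n d Y u \<le> card {..<d}"
    unfolding const_col_errors_def by (intro card_mono) auto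
  then show ?thesis by simp
qed

lemma code_prob_nonneg: "2 \<le> K \<Longrightarrow> om \<in> code_space n K d \<Longrightarrow> 0 \<le> code_prob n K d om"
  unfolding code_prob_def code_space_def by (intro prod_nonneg col_prob_nonneg) auto

lemma sum_code_prob: "2 \<le> K \<Longrightarrow> (\<Sum>om\<in>code_space n K d. code_prob n K d om) = 1"
  unfolding code_prob_def code_space_def by (rule sum_prod_weights_eq_1) (auto simp: sum_col_prob)

lemma sum_code_prob_split:
  assumes "j < d"
  shows "(\<Sum>om\<in>code_space n K d. code_prob n K d om * G om) =
    (\<Sum>\<rho>\<in>PiE ({..<d} - {j}) (\<lambda>_. col_space n K). (\<Prod>j'\<in>{..<d} - {j}. col_prob n K (\<rho> j')) *
       (\<Sum>s\<in>col_space n K. col_prob n K s * G (\<rho>(j := s))))"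
  unfolding code_space_def code_prob_def using assms by (intro sum_prod_weights_split) auto

lemma sum_code_prob_marginal:
  assumes "j < d" "2 \<le> K"
  shows "(\<Sum>om\<in>code_space n K d. code_prob n K d om * F (om j)) = (\<Sum>s\<in>col_space n K. col_prob n K s * F s)"
  unfolding code_space_def code_prob_def using assms by (intro sum_prod_weights_marginal) (auto simp: sum_col_prob)

lemma sum_code_prob_marginal2:
  assumes "j < d" "j' < d" "j \<noteq> j'" "2 \<le> K"
  shows "(\<Sum>om\<in>code_space n K d. code_prob n K d om * (F (om j) * G (om j'))) =
    (\<Sum>s\<in>col_space n K. col_prob n K s * F s) * (\<Sum>s\<in>col_space n K. col_prob n K s * G s)"
  unfolding code_space_def code_prob_def using assms by (intro sum_prod_weights_marginal2) (auto simp: sum_col_prob)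

lemma sum_code_prob_square_sum:
  assumes K: "2 \<le> K" and centered: "(\<Sum>s\<in>col_space n K. col_prob n K s * f s) = 0"
  shows "(\<Sum>om\<in>code_space n K d. code_prob n K d om * (\<Sum>j<d. f (om j))^2) =
    real d * (\<Sum>s\<in>col_space n K. col_prob n K s * (f s)^2)"
proof -
  have "(\<Sum>om\<in>code_space n K d. code_prob n K d om * (\<Sum>j<d. f (om j))^2) =
    (\<Sum>j<d. \<Sum>j'<d. \<Sum>om\<in>code_space n K d. code_prob n K d om * (f (om j) * f (om j')))"
    by (simp add: power2_eq_square sum_product sum_weighted_swap2)
  also have "\<dots> = (\<Sum>j<d. \<Sum>j'<d. if j = j' then (\<Sum>s\<in>col_space n K. col_prob n K s * (f s)^2) else 0)"
    using sum_code_prob_marginal[OF _ K, where F = "\<lambda>s. (f s)^2"]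
      sum_code_prob_marginal2[OF _ _ _ K, where F = f and G = f] centered
    by (intro sum.cong refl) (auto simp: power2_eq_square)
  finally show ?thesis by simp
qed

lemma sum_code_prob_lr_incr_eq_0:
  assumes j: "j < d" and i: "i < n"
    and inv: "\<And>om k x. \<Phi> (om(j := (k, x(i := False)))) = \<Phi> (om(j := (k, x)))"
  shows "(\<Sum>om\<in>code_space n K d. code_prob n K d om * (lr_incr K i (om j) * \<Phi> om)) = 0"
  by (subst sum_code_prob_split[OF j], rule sum.neutral)
     (use sum_col_prob_lr_incr_eq_0[OF i, where G = "\<lambda>s. \<Phi> (\<rho>(j := s))" for \<rho>] inv in auto)

section \<open>The fingerprinting argument\<close>

text \<open>The error budget \<open>26/75\<close> is what an estimator achieves that errs on at most \<open>1/75\<close> of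
  the columns with probability \<open>2/3\<close> (\<open>expected_errors_le\<close>).\<close>

locale fingerprinting =
  fixes n K d :: nat and q :: "(nat \<Rightarrow> nat \<Rightarrow> bool) \<Rightarrow> (nat \<Rightarrow> bool) \<Rightarrow> real" and \<epsilon> \<delta> :: real
  assumes K_def: "K = 10 * n" and n_ge_1: "1 \<le> n" and d_ge_1: "1 \<le> d"
    and eps_nonneg: "0 \<le> \<epsilon>" and delta_nonneg: "0 \<le> \<delta>"
    and q_nonneg: "\<And>Y u. Y \<in> datasets n d \<Longrightarrow> u \<in> bitvecs d \<Longrightarrow> 0 \<le> q Y u"
    and sum_q: "\<And>Y. Y \<in> datasets n d \<Longrightarrow> sum (q Y) (bitvecs d) = 1"
    and q_dp: "\<And>Y Y' R. neighbors n d Y Y' \<Longrightarrow> R \<subseteq> bitvecs d \<Longrightarrow> sum (q Y) R \<le> exp \<epsilon> * sum (q Y') R + \<delta>"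
    and q_few_errors: "\<And>Y. Y \<in> datasets n d \<Longrightarrow>
      (\<Sum>u\<in>bitvecs d. q Y u * real (const_col_errors n d Y u)) \<le> real d * (26/75)"
begin

abbreviation data :: "(nat \<Rightarrow> nat \<times> (nat \<Rightarrow> bool)) \<Rightarrow> nat \<Rightarrow> nat \<Rightarrow> bool" where
  "data om \<equiv> code_data n d om"

abbreviation out_mean :: "(nat \<Rightarrow> nat \<Rightarrow> bool) \<Rightarrow> ((nat \<Rightarrow> bool) \<Rightarrow> real) \<Rightarrow> real" where
  "out_mean Y f \<equiv> \<Sum>u\<in>bitvecs d. q Y u * f u"

abbreviation code_mean :: "((nat \<Rightarrow> nat \<times> (nat \<Rightarrow> bool)) \<Rightarrow> real) \<Rightarrow> real" where
  "code_mean F \<equiv> \<Sum>om\<in>code_space n K d. code_prob n K d om * F om"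

text \<open>\<open>corr i om u\<close> correlates the output \<open>u\<close> with the \<open>i\<close>-th likelihood-ratio increments of
  the columns; \<open>row_corr i\<close> is its mean when the estimator is run on data drawn from the
  prior.  Summed over the rows it is large (\<open>sum_row_corr_ge\<close>), while privacy makes every
  single row's share small (\<open>row_corr_le\<close>).\<close>

definition corr :: "nat \<Rightarrow> (nat \<Rightarrow> nat \<times> (nat \<Rightarrow> bool)) \<Rightarrow> (nat \<Rightarrow> bool) \<Rightarrow> real" where
  "corr i om u = (\<Sum>j<d. if u j then lr_incr K i (om j) else 0)"

definition row_corr :: "nat \<Rightarrow> real" where
  "row_corr i = code_mean (\<lambda>om. out_mean (data om) (corr i om))"

definition abs_corr_bound :: "nat \<Rightarrow> (nat \<Rightarrow> nat \<times> (nat \<Rightarrow> bool)) \<Rightarrow> real" where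
  "abs_corr_bound i om = (\<Sum>j<d. \<bar>lr_incr K i (om j)\<bar>)"

definition incr_abs_mean :: "nat \<Rightarrow> real" where
  "incr_abs_mean i = (\<Sum>s\<in>col_space n K. col_prob n K s * \<bar>lr_incr K i s\<bar>)"

definition incr_sq_mean :: "nat \<Rightarrow> real" where
  "incr_sq_mean i = (\<Sum>s\<in>col_space n K. col_prob n K s * (lr_incr K i s)^2)"

definition incr_var :: real where
  "incr_var = 96 * interior_prob K / real K"

definition trunc_level :: real where
  "trunc_level = real d * (sqrt incr_var + interior_prob K)"

lemma K_ge_2: "2 \<le> K"
  using K_def n_ge_1 by simp

lemma interior_prob_pos: "0 < interior_prob K"
  using K_ge_2 by (simp add: interior_prob_def)

lemma incr_var_nonneg: "0 \<le> incr_var"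
  using interior_prob_pos by (simp add: incr_var_def)

lemma trunc_level_nonneg: "0 \<le> trunc_level"
  using interior_prob_pos incr_var_nonneg by (simp add: trunc_level_def)

lemma code_mean_mono: "(\<And>om. om \<in> code_space n K d \<Longrightarrow> F om \<le> G om) \<Longrightarrow> code_mean F \<le> code_mean G"
  by (intro sum_mono mult_left_mono code_prob_nonneg[OF K_ge_2])

lemma out_mean_data_mono:
  "(\<And>u. u \<in> bitvecs d \<Longrightarrow> f u \<le> g u) \<Longrightarrow> out_mean (data om) f \<le> out_mean (data om) g"
  by (intro sum_mono mult_left_mono q_nonneg[OF code_data_datasets])

lemma incr_sq_mean_le: "i < n \<Longrightarrow> incr_sq_mean i \<le> incr_var"
  unfolding incr_sq_mean_def incr_var_def using lr_incr_second_moment_le[OF K_def n_ge_1] by simp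

lemma incr_abs_mean_le: "i < n \<Longrightarrow> incr_abs_mean i \<le> sqrt incr_var"
  using lr_incr_abs_moment_le[OF K_ge_2, of n i] incr_sq_mean_le[of i]
  unfolding incr_abs_mean_def incr_sq_mean_def by (meson order_trans real_sqrt_le_iff)

lemma abs_corr_le: "\<bar>corr i om u\<bar> \<le> abs_corr_bound i om"
  unfolding corr_def abs_corr_bound_def by (rule order_trans[OF sum_abs]) (intro sum_mono, auto)

lemma corr_dp_shift:
  assumes "i < n"
  shows "out_mean (data om) (corr i om) \<le> out_mean (zero_row i (data om)) (corr i om)
     + (exp \<epsilon> - 1) * out_mean (zero_row i (data om)) (\<lambda>u. \<bar>corr i om u\<bar>)
     + 2 * \<delta> * trunc_level + 2 * max (abs_corr_bound i om - trunc_level) 0"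
proof -
  have Y: "data om \<in> datasets n d" by (rule code_data_datasets)
  have Y': "zero_row i (data om) \<in> datasets n d" by (rule zero_row_datasets[OF Y])
  have nb: "neighbors n d (data om) (zero_row i (data om))" by (rule neighbors_zero_row[OF Y assms])
  show ?thesis
    by (rule dp_mean_shift_le[OF finite_bitvecs q_nonneg[OF Y] q_nonneg[OF Y'] sum_q[OF Y] sum_q[OF Y']
          q_dp[OF nb] q_dp[OF neighbors_sym[OF nb]] eps_nonneg delta_nonneg trunc_level_nonneg abs_corr_le])
qed

text \<open>Once row \<open>i\<close> is erased, the output no longer depends on the bits the \<open>i\<close>-th
  increments are generated from.\<close>

lemma mean_incr_zero_row_eq_0:
  assumes "i < n" "j < d" and \<Phi>: "\<And>om k x. \<Phi> (om(j := (k, x(i := False)))) = \<Phi> (om(j := (k, x)))"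
  shows "code_mean (\<lambda>om. q (zero_row i (data om)) u * (lr_incr K i (om j) * \<Phi> om)) = 0"
proof -
  have "code_mean (\<lambda>om. lr_incr K i (om j) * (q (zero_row i (data om)) u * \<Phi> om)) = 0"
    by (rule sum_code_prob_lr_incr_eq_0[OF assms(2,1)]) (simp add: \<Phi> zero_row_code_data_fun_upd)
  then show ?thesis by (simp add: mult_ac)
qed

lemma mean_corr_zero_row_eq_0:
  assumes i: "i < n"
  shows "code_mean (\<lambda>om. out_mean (zero_row i (data om)) (corr i om)) = 0"
proof -
  have "code_mean (\<lambda>om. out_mean (zero_row i (data om)) (corr i om)) =
     (\<Sum>j<d. \<Sum>u\<in>bitvecs d. code_mean (\<lambda>om. q (zero_row i (data om)) u * (if u j then lr_incr K i (om j) else 0)))"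
    unfolding corr_def by (rule sum_weighted_swap3)
  also have "\<dots> = 0"
  proof (rule sum.neutral, rule ballI, rule sum.neutral, rule ballI)
    fix j u assume "j \<in> {..<d}"
    then show "code_mean (\<lambda>om. q (zero_row i (data om)) u * (if u j then lr_incr K i (om j) else 0)) = 0"
      using mean_incr_zero_row_eq_0[OF i, of j "\<lambda>_. 1" u] by (cases "u j") simp_all
  qed
  finally show ?thesis .
qed

lemma mean_corr_square_zero_row_le:
  assumes i: "i < n"
  shows "code_mean (\<lambda>om. out_mean (zero_row i (data om)) (\<lambda>u. (corr i om u)^2)) \<le> real d * incr_var"
proof -
  define Q where "Q om u = q (zero_row i (data om)) u" for om u
  define c where "c u j om = (if u j then lr_incr K i (om j) else 0)" for u and j :: nat and om
  have Q0: "0 \<le> Q om u" if "u \<in> bitvecs d" for om u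
    unfolding Q_def by (rule q_nonneg[OF zero_row_datasets[OF code_data_datasets] that])
  have "code_mean (\<lambda>om. \<Sum>u\<in>bitvecs d. Q om u * (corr i om u)^2) =
     (\<Sum>j<d. \<Sum>u\<in>bitvecs d. code_mean (\<lambda>om. Q om u * (\<Sum>j'<d. c u j om * c u j' om)))"
    unfolding corr_def power2_eq_square sum_product c_def by (rule sum_weighted_swap3)
  also have "\<dots> = (\<Sum>j<d. \<Sum>u\<in>bitvecs d. code_mean (\<lambda>om. Q om u * (c u j om)^2))"
  proof (rule sum.cong[OF refl], rule sum.cong[OF refl])
    fix j u assume j: "j \<in> {..<d}"
    have cross: "code_mean (\<lambda>om. Q om u * (c u j om * c u j' om)) = 0" if "j' \<in> {..<d} - {j}" for j'
      using mean_incr_zero_row_eq_0[OF i, of j "\<lambda>om. lr_incr K i (om j')" u] that j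
      by (cases "u j"; cases "u j'") (auto simp: Q_def c_def mult_ac)
    have "code_mean (\<lambda>om. Q om u * (\<Sum>j'<d. c u j om * c u j' om)) =
      (\<Sum>j'<d. code_mean (\<lambda>om. Q om u * (c u j om * c u j' om)))"
      by (subst sum.swap) (simp add: sum_distrib_left)
    also have "\<dots> = code_mean (\<lambda>om. Q om u * (c u j om)^2)"
      using j cross by (subst sum.remove[of _ j]) (auto simp: power2_eq_square)
    finally show "code_mean (\<lambda>om. Q om u * (\<Sum>j'<d. c u j om * c u j' om)) = code_mean (\<lambda>om. Q om u * (c u j om)^2)" .
  qed
  also have "\<dots> \<le> (\<Sum>j<d. \<Sum>u\<in>bitvecs d. code_mean (\<lambda>om. Q om u * (lr_incr K i (om j))^2))"
    by (intro sum_mono code_mean_mono mult_left_mono Q0) (auto simp: c_def)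
  also have "\<dots> = (\<Sum>j<d. incr_sq_mean i)"
  proof (intro sum.cong refl)
    fix j assume "j \<in> {..<d}"
    have "(\<Sum>u\<in>bitvecs d. code_mean (\<lambda>om. Q om u * (lr_incr K i (om j))^2)) =
      code_mean (\<lambda>om. (lr_incr K i (om j))^2 * sum (Q om) (bitvecs d))"
      by (subst sum.swap) (simp add: sum_distrib_left sum_distrib_right mult_ac)
    also have "\<dots> = code_mean (\<lambda>om. (lr_incr K i (om j))^2)"
      by (simp add: Q_def sum_q[OF zero_row_datasets[OF code_data_datasets]])
    finally show "(\<Sum>u\<in>bitvecs d. code_mean (\<lambda>om. Q om u * (lr_incr K i (om j))^2)) = incr_sq_mean i"
      using sum_code_prob_marginal[OF _ K_ge_2, where F = "\<lambda>s. (lr_incr K i s)^2"] \<open>j \<in> {..<d}\<close>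
      by (simp add: incr_sq_mean_def)
  qed
  also have "\<dots> \<le> real d * incr_var" using incr_sq_mean_le[OF i] by (simp add: mult_left_mono)
  finally show ?thesis by (simp add: Q_def)
qed

lemma mean_abs_corr_zero_row_le:
  assumes i: "i < n"
  shows "code_mean (\<lambda>om. out_mean (zero_row i (data om)) (\<lambda>u. \<bar>corr i om u\<bar>)) \<le> sqrt (real d * incr_var)"
proof -
  define g where "g om = out_mean (zero_row i (data om)) (\<lambda>u. \<bar>corr i om u\<bar>)" for om
  have "(code_mean g)^2 \<le> code_mean (\<lambda>om. (g om)^2)"
    by (rule square_mean_le_mean_square) (auto intro: code_prob_nonneg[OF K_ge_2] simp: sum_code_prob[OF K_ge_2])
  also have "\<dots> \<le> code_mean (\<lambda>om. out_mean (zero_row i (data om)) (\<lambda>u. (corr i om u)^2))"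
  proof (rule code_mean_mono)
    fix om
    show "(g om)^2 \<le> out_mean (zero_row i (data om)) (\<lambda>u. (corr i om u)^2)"
      unfolding g_def
      using square_mean_le_mean_square[OF finite_bitvecs, where w = "q (zero_row i (data om))" and f = "\<lambda>u. \<bar>corr i om u\<bar>"]
        q_nonneg[OF zero_row_datasets[OF code_data_datasets]] sum_q[OF zero_row_datasets[OF code_data_datasets]]
      by simp
  qed
  also have "\<dots> \<le> real d * incr_var" by (rule mean_corr_square_zero_row_le[OF i])
  finally show ?thesis unfolding g_def by (intro real_le_rsqrt)
qed

text \<open>A Chebyshev bound: \<open>abs_corr_bound i om\<close> is a sum of \<open>d\<close> independent terms of mean
  \<open>incr_abs_mean i \<le> sqrt incr_var\<close>, and \<open>trunc_level\<close> exceeds \<open>d\<close> times that mean by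
  \<open>d * interior_prob K\<close>.\<close>

lemma mean_excess_corr_bound_le:
  assumes i: "i < n"
  shows "code_mean (\<lambda>om. max (abs_corr_bound i om - trunc_level) 0) \<le> incr_var / interior_prob K"
proof -
  define M where "M = incr_abs_mean i"
  define gap where "gap = trunc_level - real d * M"
  define f where "f s = \<bar>lr_incr K i s\<bar> - M" for s
  have gap: "real d * interior_prob K \<le> gap"
    using mult_left_mono[OF incr_abs_mean_le[OF i], of "real d"]
    by (simp add: M_def gap_def trunc_level_def algebra_simps)
  have "0 < real d * interior_prob K" using d_ge_1 interior_prob_pos by simp
  then have gap_pos: "0 < gap" using gap by linarith
  have centered: "(\<Sum>s\<in>col_space n K. col_prob n K s * f s) = 0"
    using sum_col_prob[OF K_ge_2, of n]
    by (simp add: f_def right_diff_distrib sum_subtractf incr_abs_mean_def M_def sum_distrib_right[symmetric])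
  have "(\<Sum>s\<in>col_space n K. col_prob n K s * (f s)^2) =
      incr_sq_mean i - 2 * M * incr_abs_mean i + M^2 * (\<Sum>s\<in>col_space n K. col_prob n K s)"
    by (simp add: f_def incr_sq_mean_def incr_abs_mean_def power2_eq_square algebra_simps
        sum.distrib sum_subtractf sum_distrib_left)
  also have "\<dots> = incr_sq_mean i - M^2"
    using sum_col_prob[OF K_ge_2, of n] by (simp add: M_def power2_eq_square)
  also have "\<dots> \<le> incr_var"
    using incr_sq_mean_le[OF i] zero_le_power2[of M] by linarith
  finally have var_f: "(\<Sum>s\<in>col_space n K. col_prob n K s * (f s)^2) \<le> incr_var" .
  have "code_mean (\<lambda>om. max (abs_corr_bound i om - trunc_level) 0) \<le>
      code_mean (\<lambda>om. (abs_corr_bound i om - real d * M)^2 / gap)"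
    using gap_pos by (intro code_mean_mono pos_part_le_square_div) (auto simp: gap_def)
  also have "\<dots> = code_mean (\<lambda>om. (\<Sum>j<d. f (om j))^2) / gap"
    by (simp add: sum_divide_distrib abs_corr_bound_def f_def sum_subtractf)
  also have "\<dots> \<le> real d * incr_var / gap"
    using gap_pos var_f
    by (simp add: sum_code_prob_square_sum[OF K_ge_2 centered] divide_right_mono mult_left_mono)
  also have "\<dots> \<le> real d * incr_var / (real d * interior_prob K)"
    using gap gap_pos d_ge_1 interior_prob_pos incr_var_nonneg by (intro divide_left_mono) auto
  also have "\<dots> = incr_var / interior_prob K" using d_ge_1 by simp
  finally show ?thesis .
qed

lemma row_corr_le:
  assumes i: "i < n"
  shows "row_corr i \<le> (exp \<epsilon> - 1) * sqrt (real d * incr_var) + 2 * \<delta> * trunc_level + 2 * (incr_var / interior_prob K)"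
proof -
  define E0 where "E0 f om = out_mean (zero_row i (data om)) (f om)" for f om
  define excess where "excess om = max (abs_corr_bound i om - trunc_level) 0" for om
  have "row_corr i \<le> code_mean (\<lambda>om. E0 (corr i) om + (exp \<epsilon> - 1) * E0 (\<lambda>om u. \<bar>corr i om u\<bar>) om
      + 2 * \<delta> * trunc_level + 2 * excess om)"
    unfolding row_corr_def E0_def excess_def by (intro code_mean_mono corr_dp_shift[OF i])
  also have "\<dots> = code_mean (E0 (corr i)) + (exp \<epsilon> - 1) * code_mean (E0 (\<lambda>om u. \<bar>corr i om u\<bar>))
      + 2 * \<delta> * trunc_level * code_mean (\<lambda>_. 1) + 2 * code_mean excess"
    by (simp add: algebra_simps sum.distrib sum_subtractf sum_distrib_left)
  also have "\<dots> \<le> 0 + (exp \<epsilon> - 1) * sqrt (real d * incr_var) + 2 * \<delta> * trunc_level * 1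
      + 2 * (incr_var / interior_prob K)"
    using mean_corr_zero_row_eq_0[OF i] mean_abs_corr_zero_row_le[OF i] mean_excess_corr_bound_le[OF i]
      sum_code_prob[OF K_ge_2] eps_nonneg delta_nonneg trunc_level_nonneg
    unfolding E0_def excess_def by (intro add_mono mult_left_mono) auto
  finally show ?thesis by simp
qed

definition out_prob :: "nat \<Rightarrow> (nat \<Rightarrow> nat \<times> (nat \<Rightarrow> bool)) \<Rightarrow> real" where
  "out_prob j om = out_mean (data om) (\<lambda>u. if u j then 1 else 0)"

definition top_hit :: "nat \<Rightarrow> real" where
  "top_hit j = code_mean (\<lambda>om. (if fst (om j) = K then 1 else 0) * out_prob j om)"

definition top_miss :: "nat \<Rightarrow> real" where
  "top_miss j = code_mean (\<lambda>om. (if fst (om j) = K then 1 else 0) * (1 - out_prob j om))"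

definition bottom_miss :: "nat \<Rightarrow> real" where
  "bottom_miss j = code_mean (\<lambda>om. (if fst (om j) = 0 then 1 else 0) * out_prob j om)"

lemma out_prob_01: "0 \<le> out_prob j om \<and> out_prob j om \<le> 1"
proof -
  have Y: "data om \<in> datasets n d" by (rule code_data_datasets)
  have "0 \<le> out_prob j om" unfolding out_prob_def using q_nonneg[OF Y] by (intro sum_nonneg) auto
  moreover have "out_prob j om \<le> out_mean (data om) (\<lambda>_. 1)"
    unfolding out_prob_def by (rule out_mean_data_mono) simp
  ultimately show ?thesis using sum_q[OF Y] by simp
qed

lemma out_prob_fun_upd: "out_prob j (\<rho>(j := s)) = out_prob j (\<rho>(j := (0, snd s)))"
proof -
  have "data (\<rho>(j := s)) = data (\<rho>(j := (0, snd s)))" by (auto simp: code_data_def fun_eq_iff)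
  then show ?thesis by (simp add: out_prob_def)
qed

lemma sum_row_corr_eq: "(\<Sum>i<n. row_corr i) = (\<Sum>j<d. code_mean (\<lambda>om. lr_excess K n (om j) * out_prob j om))"
proof -
  have corr_sum: "(\<Sum>i<n. corr i om u) = (\<Sum>j<d. lr_excess K n (om j) * (if u j then 1 else 0))" for om u
  proof -
    have "(\<Sum>i<n. if u j then lr_incr K i (om j) else 0) = lr_excess K n (om j) * (if u j then 1 else 0)" for j
      by (cases "u j") (simp_all add: sum_lr_incr)
    then show ?thesis unfolding corr_def by (subst sum.swap) simp
  qed
  have "(\<Sum>i<n. row_corr i) = code_mean (\<lambda>om. \<Sum>i<n. out_mean (data om) (corr i om))"
    unfolding row_corr_def sum_distrib_left by (rule sum.swap)
  also have "\<dots> = code_mean (\<lambda>om. out_mean (data om) (\<lambda>u. \<Sum>i<n. corr i om u))"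
    unfolding sum_distrib_left by (rule sum.cong[OF refl], rule sum.swap)
  also have "\<dots> = code_mean (\<lambda>om. \<Sum>j<d. lr_excess K n (om j) * out_prob j om)"
  proof (rule sum.cong[OF refl])
    fix om
    have "out_mean (data om) (\<lambda>u. \<Sum>i<n. corr i om u) =
      (\<Sum>j<d. \<Sum>u\<in>bitvecs d. q (data om) u * (lr_excess K n (om j) * (if u j then 1 else 0)))"
      unfolding corr_sum sum_distrib_left by (rule sum.swap)
    also have "\<dots> = (\<Sum>j<d. lr_excess K n (om j) * out_prob j om)"
      by (simp add: out_prob_def sum_distrib_left mult_ac)
    finally show "code_prob n K d om * out_mean (data om) (\<lambda>u. \<Sum>i<n. corr i om u) =
      code_prob n K d om * (\<Sum>j<d. lr_excess K n (om j) * out_prob j om)" by simp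
  qed
  also have "\<dots> = (\<Sum>j<d. code_mean (\<lambda>om. lr_excess K n (om j) * out_prob j om))"
    unfolding sum_distrib_left by (rule sum.swap)
  finally show ?thesis .
qed

text \<open>Conditionally on the other columns, the signal of column \<open>j\<close> is the telescoping
  sum of \<open>lr_excess_signal_ge\<close>, whose ends are the probabilities of reporting \<open>1\<close> on the
  all-ones and all-zeros column.\<close>

lemma col_signal_ge:
  assumes j: "j < d"
  shows "code_mean (\<lambda>om. lr_excess K n (om j) * out_prob j om) \<ge>
    interior_prob K * ((20/9) * top_hit j - (20/9) * bottom_miss j - 2 * real n * bias K 1)"
proof -
  define Pr where "Pr \<rho> = (\<Prod>j'\<in>{..<d} - {j}. col_prob n K (\<rho> j'))" for \<rho> :: "nat \<Rightarrow> nat \<times> (nat \<Rightarrow> bool)"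
  define R where "R = PiE ({..<d} - {j}) (\<lambda>_. col_space n K)"
  define col_mean_at where "col_mean_at F \<rho> = (\<Sum>s\<in>col_space n K. col_prob n K s * (F s * out_prob j (\<rho>(j := s))))"
    for F \<rho>
  define top where "top s = (if fst s = K then 1 else (0::real))" for s :: "nat \<times> (nat \<Rightarrow> bool)"
  define bot where "bot s = (if fst s = 0 then 1 else (0::real))" for s :: "nat \<times> (nat \<Rightarrow> bool)"
  have Pr0: "0 \<le> Pr \<rho>" if "\<rho> \<in> R" for \<rho>
    unfolding Pr_def using that K_ge_2 by (intro prod_nonneg col_prob_nonneg) (auto simp: R_def)
  have sum_Pr: "(\<Sum>\<rho>\<in>R. Pr \<rho>) = 1"
    unfolding Pr_def R_def by (rule sum_prod_weights_eq_1) (auto simp: sum_col_prob[OF K_ge_2])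
  have split: "code_mean (\<lambda>om. F (om j) * out_prob j om) = (\<Sum>\<rho>\<in>R. Pr \<rho> * col_mean_at F \<rho>)" for F
    unfolding Pr_def R_def col_mean_at_def by (subst sum_code_prob_split[OF j]) simp
  have pointwise: "interior_prob K * ((20/9) * col_mean_at top \<rho> - (20/9) * col_mean_at bot \<rho> - 2 * real n * bias K 1)
    \<le> col_mean_at (lr_excess K n) \<rho>" for \<rho>
  proof -
    define G where "G x = out_prob j (\<rho>(j := (0, x)))" for x
    have G: "out_prob j (\<rho>(j := s)) = G (snd s)" for s unfolding G_def by (rule out_prob_fun_upd)
    have "(20/9) * col_mean_at top \<rho> = G (ones n)" "(20/9) * col_mean_at bot \<rho> = G (zeros n)"
      using col_prob_top_level[OF K_ge_2, of n G] col_prob_bottom_level[OF K_ge_2, of n G]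
      by (simp_all add: col_mean_at_def top_def bot_def G)
    moreover have "col_mean_at (lr_excess K n) \<rho> = (\<Sum>s\<in>col_space n K. col_prob n K s * (lr_excess K n s * G (snd s)))"
      by (simp add: col_mean_at_def G)
    ultimately show ?thesis
      using lr_excess_signal_ge[OF K_def n_ge_1, of G] out_prob_01 by (simp add: G_def)
  qed
  have linear: "(\<Sum>\<rho>\<in>R. Pr \<rho> * (v * (e * a \<rho> - e * b \<rho> - c))) =
      v * (e * (\<Sum>\<rho>\<in>R. Pr \<rho> * a \<rho>) - e * (\<Sum>\<rho>\<in>R. Pr \<rho> * b \<rho>) - c * (\<Sum>\<rho>\<in>R. Pr \<rho>))"
    for v e c :: real and a b :: "(nat \<Rightarrow> nat \<times> (nat \<Rightarrow> bool)) \<Rightarrow> real"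
    by (simp add: algebra_simps sum_subtractf sum_distrib_left sum.distrib)
  have "top_hit j = code_mean (\<lambda>om. top (om j) * out_prob j om)"
    "bottom_miss j = code_mean (\<lambda>om. bot (om j) * out_prob j om)"
    by (simp_all add: top_hit_def bottom_miss_def top_def bot_def)
  then have "interior_prob K * ((20/9) * top_hit j - (20/9) * bottom_miss j - 2 * real n * bias K 1) =
    (\<Sum>\<rho>\<in>R. Pr \<rho> * (interior_prob K * ((20/9) * col_mean_at top \<rho> - (20/9) * col_mean_at bot \<rho> - 2 * real n * bias K 1)))"
    by (simp only: split linear sum_Pr mult_1_right)
  also have "\<dots> \<le> (\<Sum>\<rho>\<in>R. Pr \<rho> * col_mean_at (lr_excess K n) \<rho>)"
    by (intro sum_mono mult_left_mono pointwise Pr0)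
  also have "\<dots> = code_mean (\<lambda>om. lr_excess K n (om j) * out_prob j om)"
    by (rule split[symmetric])
  finally show ?thesis .
qed

lemma top_hit_eq: assumes j: "j < d" shows "top_hit j = 9/20 - top_miss j"
proof -
  have "top_hit j + top_miss j = code_mean (\<lambda>om. (\<lambda>s. if fst s = K then 1 else 0) (om j))"
    unfolding top_hit_def top_miss_def by (simp add: sum.distrib[symmetric] algebra_simps)
  also have "\<dots> = (\<Sum>s\<in>col_space n K. col_prob n K s * (if fst s = K then 1 else 0))"
    by (rule sum_code_prob_marginal[OF j K_ge_2])
  also have "\<dots> = 9/20" using col_prob_top_level[OF K_ge_2, of n "\<lambda>_. 1"] by simp
  finally show ?thesis by simp
qed

lemma code_prob_nonzero_const_cols:
  assumes om: "om \<in> code_space n K d" and W: "code_prob n K d om \<noteq> 0" and j: "j < d"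
  shows "fst (om j) = K \<Longrightarrow> (\<forall>i<n. data om i j)" and "fst (om j) = 0 \<Longrightarrow> (\<forall>i<n. \<not> data om i j)"
proof -
  have D: "col_prob n K (om j) \<noteq> 0" using W j unfolding code_prob_def by (auto simp: prod_zero_iff)
  have x: "snd (om j) \<in> bitvecs n" using om j by (auto simp: code_space_def col_space_def PiE_def Pi_def)
  show "fst (om j) = K \<Longrightarrow> (\<forall>i<n. data om i j)"
  proof -
    assume "fst (om j) = K"
    then have "bern_vec n 1 (snd (om j)) \<noteq> 0" using D K_ge_2 by (simp add: col_prob_def)
    then have "snd (om j) = ones n" using bern_vec_1[OF x] by (auto split: if_splits)
    then show ?thesis using j by (simp add: code_data_def ones_def)
  qed
  show "fst (om j) = 0 \<Longrightarrow> (\<forall>i<n. \<not> data om i j)"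
  proof -
    assume "fst (om j) = 0"
    then have "bern_vec n 0 (snd (om j)) \<noteq> 0" using D by (simp add: col_prob_def)
    then have "snd (om j) = zeros n" using bern_vec_0[OF x] by (auto split: if_splits)
    then show ?thesis using j by (simp add: code_data_def zeros_def)
  qed
qed

lemma const_misses_le_errors:
  assumes om: "om \<in> code_space n K d" and W: "code_prob n K d om \<noteq> 0"
  shows "(\<Sum>j<d. (if fst (om j) = K then 1 else 0) * (1 - out_prob j om) + (if fst (om j) = 0 then 1 else 0) * out_prob j om)
     \<le> out_mean (data om) (\<lambda>u. real (const_col_errors n d (data om) u))"
proof -
  define miss where "miss j u = (if fst (om j) = K then 1 else 0) * (if u j then 0 else 1)
    + (if fst (om j) = 0 then 1 else (0::real)) * (if u j then 1 else 0)" for j u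
  have Y: "data om \<in> datasets n d" by (rule code_data_datasets)
  have "(if fst (om j) = K then 1 else 0) * (1 - out_prob j om) + (if fst (om j) = 0 then 1 else 0) * out_prob j om
      = out_mean (data om) (miss j)" if "j < d" for j
  proof -
    have "out_mean (data om) (\<lambda>u. if u j then 0 else 1) + out_prob j om = out_mean (data om) (\<lambda>_. 1)"
      unfolding out_prob_def sum.distrib[symmetric] by (rule sum.cong) auto
    then have "1 - out_prob j om = out_mean (data om) (\<lambda>u. if u j then 0 else 1)"
      using sum_q[OF Y] by simp
    moreover have "out_mean (data om) (miss j) = (if fst (om j) = K then 1 else 0) * out_mean (data om) (\<lambda>u. if u j then 0 else 1)
        + (if fst (om j) = 0 then 1 else 0) * out_prob j om"
      unfolding miss_def out_prob_def by (simp add: distrib_left sum.distrib sum_distrib_left mult.left_commute)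
    ultimately show ?thesis by simp
  qed
  then have "(\<Sum>j<d. (if fst (om j) = K then 1 else 0) * (1 - out_prob j om) + (if fst (om j) = 0 then 1 else 0) * out_prob j om)
      = out_mean (data om) (\<lambda>u. \<Sum>j<d. miss j u)"
    by (simp add: sum_distrib_left sum.swap[of _ "{..<d}"])
  also have "\<dots> \<le> out_mean (data om) (\<lambda>u. real (const_col_errors n d (data om) u))"
  proof (rule out_mean_data_mono)
    fix u
    define E where "E = {j\<in>{..<d}. ((\<forall>i<n. data om i j) \<and> \<not> u j) \<or> ((\<forall>i<n. \<not> data om i j) \<and> u j)}"
    have "(\<Sum>j<d. miss j u) \<le> (\<Sum>j<d. if j \<in> E then 1 else 0)"
      using code_prob_nonzero_const_cols[OF om W] K_ge_2 by (intro sum_mono) (auto simp: miss_def E_def)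
    also have "\<dots> = real (card E)" by (simp add: sum.If_cases E_def Int_def)
    finally show "(\<Sum>j<d. miss j u) \<le> real (const_col_errors n d (data om) u)"
      by (simp add: const_col_errors_def E_def)
  qed
  finally show ?thesis .
qed

lemma sum_misses_le: "(\<Sum>j<d. top_miss j + bottom_miss j) \<le> real d * (26/75)"
proof -
  have "(\<Sum>j<d. top_miss j + bottom_miss j) = code_mean (\<lambda>om.
      \<Sum>j<d. (if fst (om j) = K then 1 else 0) * (1 - out_prob j om) + (if fst (om j) = 0 then 1 else 0) * out_prob j om)"
    unfolding top_miss_def bottom_miss_def
    by (simp add: sum.distrib[symmetric] sum_distrib_left algebra_simps) (rule sum.swap)
  also have "\<dots> \<le> code_mean (\<lambda>om. out_mean (data om) (\<lambda>u. real (const_col_errors n d (data om) u)))"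
  proof (rule sum_mono)
    fix om assume om: "om \<in> code_space n K d"
    show "code_prob n K d om * (\<Sum>j<d. (if fst (om j) = K then 1 else 0) * (1 - out_prob j om) + (if fst (om j) = 0 then 1 else 0) * out_prob j om)
      \<le> code_prob n K d om * out_mean (data om) (\<lambda>u. real (const_col_errors n d (data om) u))"
      using const_misses_le_errors[OF om] code_prob_nonneg[OF K_ge_2 om]
      by (cases "code_prob n K d om = 0") (auto intro: mult_left_mono)
  qed
  also have "\<dots> \<le> code_mean (\<lambda>_. real d * (26/75))"
    by (intro code_mean_mono q_few_errors[OF code_data_datasets])
  also have "\<dots> = real d * (26/75)" unfolding sum_distrib_right[symmetric] sum_code_prob[OF K_ge_2] by simp
  finally show ?thesis .
qed

lemma sum_row_corr_ge:
  "interior_prob K * (real d - (20/9) * (real d * (26/75)) - 2 * real n * bias K 1 * real d) \<le> (\<Sum>i<n. row_corr i)"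
proof -
  have "interior_prob K * (real d - (20/9) * (real d * (26/75)) - 2 * real n * bias K 1 * real d) \<le>
      interior_prob K * (real d - (20/9) * (\<Sum>j<d. top_miss j + bottom_miss j) - 2 * real n * bias K 1 * real d)"
    using sum_misses_le interior_prob_pos by (intro mult_left_mono) auto
  also have "\<dots> = (\<Sum>j<d. interior_prob K * (1 - (20/9) * (top_miss j + bottom_miss j) - 2 * real n * bias K 1))"
  proof -
    have "(\<Sum>j<d. v * (1 - c * x j - e)) = v * (real d - c * (\<Sum>j<d. x j) - e * real d)"
      for v c e :: real and x :: "nat \<Rightarrow> real"
    proof -
      have "(\<Sum>j<d. v * (1 - c * x j - e)) = (\<Sum>j<d. (v - v * e) - (v * c) * x j)"
        by (rule sum.cong[OF refl]) (simp add: algebra_simps)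
      also have "\<dots> = real d * (v - v * e) - (v * c) * (\<Sum>j<d. x j)"
        by (simp add: sum_subtractf sum_distrib_left)
      finally show ?thesis by (simp add: algebra_simps)
    qed
    from this[where x = "\<lambda>j. top_miss j + bottom_miss j"] show ?thesis by (rule sym)
  qed
  also have "\<dots> = (\<Sum>j<d. interior_prob K * ((20/9) * top_hit j - (20/9) * bottom_miss j - 2 * real n * bias K 1))"
    by (intro sum.cong refl) (simp add: top_hit_eq algebra_simps)
  also have "\<dots> \<le> (\<Sum>i<n. row_corr i)"
    unfolding sum_row_corr_eq by (intro sum_mono col_signal_ge) auto
  finally show ?thesis .
qed

lemma inverse_K_le: "1 / real K \<le> 10 * interior_prob K"
  using K_ge_2 by (simp add: interior_prob_def field_simps)

lemma sqrt_incr_var_le: "sqrt incr_var \<le> 31 * interior_prob K"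
proof -
  have "incr_var = 96 * interior_prob K * (1 / real K)" by (simp add: incr_var_def)
  also have "\<dots> \<le> 96 * interior_prob K * (10 * interior_prob K)"
    using inverse_K_le interior_prob_pos by (intro mult_left_mono) auto
  also have "\<dots> \<le> (31 * interior_prob K)^2" by (simp add: power2_eq_square)
  finally show ?thesis using interior_prob_pos by (intro real_le_lsqrt) auto
qed

lemma incr_var_div_le: "incr_var / interior_prob K \<le> 960 * interior_prob K"
  using inverse_K_le interior_prob_pos by (simp add: incr_var_def)

lemma n_bias_1_le: "2 * real n * bias K 1 \<le> 6 / 100"
proof -
  have n: "1 \<le> real n" using n_ge_1 by simp
  have "2 * real n * bias K 1 \<le> 2 * real n * (3 / (100 * real n * real n))"
    using bias_1_le[of K] K_ge_2 n by (intro mult_left_mono) (auto simp: K_def power2_eq_square)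
  also have "\<dots> \<le> 6 / 100" using n by (simp add: field_simps)
  finally show ?thesis .
qed

lemma sum_row_corr_lower: "interior_prob K * (real d * (31/135 - 6/100)) \<le> (\<Sum>i<n. row_corr i)"
proof -
  have "2 * real n * bias K 1 * real d \<le> 6/100 * real d"
    using n_bias_1_le by (intro mult_right_mono) auto
  then have "interior_prob K * (real d * (31/135 - 6/100)) \<le>
      interior_prob K * (real d - (20/9) * (real d * (26/75)) - 2 * real n * bias K 1 * real d)"
    using interior_prob_pos by (intro mult_left_mono) (auto simp: algebra_simps)
  then show ?thesis using sum_row_corr_ge by linarith
qed

lemma sum_row_corr_upper:
  assumes "\<epsilon> \<le> 1"
  shows "(\<Sum>i<n. row_corr i) \<le>
    interior_prob K * (62 * (real n * \<epsilon>) * sqrt (real d) + 64 * (real n * \<delta>) * real d + 1920 * real n)"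
proof -
  define v where "v = interior_prob K"
  have v: "0 < v" using interior_prob_pos by (simp add: v_def)
  have "sqrt (real d * incr_var) = sqrt (real d) * sqrt incr_var" by (simp add: real_sqrt_mult)
  also have "\<dots> \<le> sqrt (real d) * (31 * v)" using sqrt_incr_var_le by (intro mult_left_mono) (auto simp: v_def)
  finally have "(exp \<epsilon> - 1) * sqrt (real d * incr_var) \<le> (2 * \<epsilon>) * (31 * v * sqrt (real d))"
    using exp_minus_1_le[OF eps_nonneg assms] eps_nonneg incr_var_nonneg by (intro mult_mono) (auto simp: mult_ac)
  moreover have "2 * \<delta> * trunc_level \<le> 2 * \<delta> * (real d * (32 * v))"
  proof -
    have "trunc_level \<le> real d * (32 * v)"
      unfolding trunc_level_def v_def using sqrt_incr_var_le by (intro mult_left_mono) auto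
    then show ?thesis using delta_nonneg by (intro mult_left_mono) auto
  qed
  moreover have "2 * (incr_var / interior_prob K) \<le> 2 * (960 * v)"
    using incr_var_div_le by (simp add: v_def)
  ultimately have "row_corr i \<le> v * (62 * \<epsilon> * sqrt (real d) + 64 * \<delta> * real d + 1920)" if "i < n" for i
    using row_corr_le[OF that] by (simp add: algebra_simps)
  then have "(\<Sum>i<n. row_corr i) \<le> real n * (v * (62 * \<epsilon> * sqrt (real d) + 64 * \<delta> * real d + 1920))"
    using sum_mono[of "{..<n}" row_corr "\<lambda>_. v * (62 * \<epsilon> * sqrt (real d) + 64 * \<delta> * real d + 1920)"] by simp
  then show ?thesis by (simp add: v_def algebra_simps)
qed

lemma fingerprinting_contradiction:
  assumes "\<epsilon> \<le> 1" and "1000 * real n * \<epsilon> \<le> sqrt (real d)"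
    and "1000 * real n * \<delta> \<le> 1" and "60000 * real n \<le> real d"
  shows False
proof -
  have "62 * (real n * \<epsilon>) * sqrt (real d) \<le> 62 / 1000 * real d"
    using assms(2) mult_right_mono[OF assms(2), of "sqrt (real d)"] by (simp add: algebra_simps)
  moreover have "64 * (real n * \<delta>) * real d \<le> 64 / 1000 * real d"
    using mult_right_mono[OF assms(3), of "real d"] by (simp add: algebra_simps)
  ultimately have "62 * (real n * \<epsilon>) * sqrt (real d) + 64 * (real n * \<delta>) * real d + 1920 * real n
      \<le> real d * (158 / 1000)"
    using assms(4) by linarith
  then have "interior_prob K * (62 * (real n * \<epsilon>) * sqrt (real d) + 64 * (real n * \<delta>) * real d + 1920 * real n)
      \<le> interior_prob K * (real d * (158 / 1000))"
    using interior_prob_pos by (intro mult_left_mono) auto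
  then have "interior_prob K * (real d * (31/135 - 6/100)) \<le> interior_prob K * (real d * (158 / 1000))"
    using sum_row_corr_lower sum_row_corr_upper[OF assms(1)] by linarith
  then show False using interior_prob_pos d_ge_1 by simp
qed

end

section \<open>From mechanisms to private bit estimators\<close>

definition accurate_dp_bits ::
  "nat \<Rightarrow> nat \<Rightarrow> ((nat \<Rightarrow> nat \<Rightarrow> bool) \<Rightarrow> (nat \<Rightarrow> bool) \<Rightarrow> real) \<Rightarrow> real \<Rightarrow> real \<Rightarrow> bool" where
  "accurate_dp_bits n d q \<epsilon> \<delta> \<longleftrightarrow>
     (\<forall>Y\<in>datasets n d. \<forall>u\<in>bitvecs d. 0 \<le> q Y u) \<and>
     (\<forall>Y\<in>datasets n d. sum (q Y) (bitvecs d) = 1) \<and>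
     (\<forall>Y Y' R. neighbors n d Y Y' \<longrightarrow> R \<subseteq> bitvecs d \<longrightarrow> sum (q Y) R \<le> exp \<epsilon> * sum (q Y') R + \<delta>) \<and>
     (\<forall>Y\<in>datasets n d. (\<Sum>u\<in>bitvecs d. q Y u * real (const_col_errors n d Y u)) \<le> real d * (26/75))"

lemma no_accurate_dp_bits:
  assumes "accurate_dp_bits n d q \<epsilon> \<delta>" "1 \<le> n" "1 \<le> d" "0 \<le> \<epsilon>" "\<epsilon> \<le> 1" "0 \<le> \<delta>"
    "1000 * real n * \<epsilon> \<le> sqrt (real d)" "1000 * real n * \<delta> \<le> 1" "60000 * real n \<le> real d"
  shows False
proof -
  interpret fingerprinting n "10 * n" d q \<epsilon> \<delta>
    using assms unfolding accurate_dp_bits_def by unfold_locales auto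
  show False by (rule fingerprinting_contradiction) (use assms in auto)
qed

lemma group_privacy:
  assumes q: "accurate_dp_bits n d q \<epsilon> \<delta>" and eps: "0 \<le> \<epsilon>" and delta: "0 \<le> \<delta>"
    and "finite L" "L \<subseteq> {..<n}" "Y \<in> datasets n d" "Y' \<in> datasets n d"
    and "\<forall>i j. i \<notin> L \<longrightarrow> Y i j = Y' i j" and R: "R \<subseteq> bitvecs d"
  shows "sum (q Y) R \<le> exp (real (card L) * \<epsilon>) * sum (q Y') R + real (card L) * exp (real (card L) * \<epsilon>) * \<delta>"
  using assms(4-8)
proof (induction L arbitrary: Y rule: finite_induct)
  case empty
  then have "Y = Y'" by (auto simp: fun_eq_iff)
  then show ?case by simp
next
  case (insert l L)
  define Z where "Z = (\<lambda>i j. if i = l then Y' i j else Y i j)"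
  define m where "m = real (card L)"
  have Z: "Z \<in> datasets n d" using insert.prems by (auto simp: Z_def datasets_def)
  have "neighbors n d Y Z"
    unfolding neighbors_def using insert.prems Z by (auto simp: Z_def intro!: exI[of _ l])
  then have step: "sum (q Y) R \<le> exp \<epsilon> * sum (q Z) R + \<delta>"
    using q R unfolding accurate_dp_bits_def by blast
  have IH: "sum (q Z) R \<le> exp (m * \<epsilon>) * sum (q Y') R + m * exp (m * \<epsilon>) * \<delta>"
    unfolding m_def by (rule insert.IH) (use Z insert.prems in \<open>auto simp: Z_def\<close>)
  have "exp \<epsilon> * sum (q Z) R \<le> exp \<epsilon> * (exp (m * \<epsilon>) * sum (q Y') R + m * exp (m * \<epsilon>) * \<delta>)"
    by (rule mult_left_mono[OF IH]) simp
  then have "sum (q Y) R \<le> exp \<epsilon> * (exp (m * \<epsilon>) * sum (q Y') R + m * exp (m * \<epsilon>) * \<delta>) + \<delta>"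
    using step by linarith
  also have "\<dots> = exp ((m + 1) * \<epsilon>) * sum (q Y') R + m * exp ((m + 1) * \<epsilon>) * \<delta> + \<delta>"
    by (simp add: exp_add[symmetric] algebra_simps)
  also have "\<dots> \<le> exp ((m + 1) * \<epsilon>) * sum (q Y') R + (m + 1) * exp ((m + 1) * \<epsilon>) * \<delta>"
    using delta eps mult_left_mono[of 1 "exp ((m + 1) * \<epsilon>)" \<delta>] by (simp add: m_def algebra_simps)
  finally show ?case
    using insert.hyps by (simp add: m_def add.commute)
qed

text \<open>Privacy degrades linearly with the group size, so an \<open>(\<epsilon>, \<delta>)\<close>-private estimator on
  \<open>n\<close> rows yields an \<open>(m \<epsilon>, m e\<^sup>m\<^sup>\<epsilon> \<delta>)\<close>-private one on \<open>\<lceil>n/m\<rceil>\<close> rows by repeating every row \<open>m\<close>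
  times (and truncating to \<open>n\<close> rows).  Repetition preserves the constant columns.\<close>

definition dup_rows :: "nat \<Rightarrow> nat \<Rightarrow> (nat \<Rightarrow> nat \<Rightarrow> bool) \<Rightarrow> nat \<Rightarrow> nat \<Rightarrow> bool" where
  "dup_rows n m X = (\<lambda>i j. i < n \<and> X (i div m) j)"

lemma dup_rows_datasets: "X \<in> datasets n' d \<Longrightarrow> dup_rows n m X \<in> datasets n d"
  by (auto simp: dup_rows_def datasets_def)

lemma card_div_eq_le:
  assumes "0 < m"
  shows "card {i. i < n \<and> i div m = l} \<le> m"
proof -
  have "l * m \<le> i \<and> i < l * m + m" if "i div m = l" for i
  proof -
    have "i = l * m + i mod m" using that by (metis div_mult_mod_eq)
    moreover have "i mod m < m" using assms by simp
    ultimately show ?thesis by linarith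
  qed
  then have "{i. i < n \<and> i div m = l} \<subseteq> {l*m..<l*m+m}" by auto
  then have "card {i. i < n \<and> i div m = l} \<le> card {l*m..<l*m+m}" by (intro card_mono) auto
  then show ?thesis by simp
qed

lemma const_col_errors_dup_rows:
  assumes m: "1 \<le> m" and n1: "n \<le> n' * m" and n2: "(n' - 1) * m < n"
  shows "const_col_errors n d (dup_rows n m X) u = const_col_errors n' d X u"
proof -
  have all_blocks: "(\<forall>i<n. P (i div m)) \<longleftrightarrow> (\<forall>l<n'. P l)" for P
  proof
    assume A: "\<forall>i<n. P (i div m)"
    show "\<forall>l<n'. P l"
    proof (intro allI impI)
      fix l assume "l < n'"
      then have "l * m < n" using n2 mult_right_mono[of l "n' - 1" m] by linarith
      then show "P l" using A m by (metis nonzero_mult_div_cancel_right not_one_le_zero)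
    qed
  next
    assume "\<forall>l<n'. P l"
    then show "\<forall>i<n. P (i div m)"
      using n1 m by (auto simp: div_less_iff_less_mult)
  qed
  show ?thesis
    unfolding const_col_errors_def dup_rows_def
    using all_blocks[of "\<lambda>l. X l j" for j] all_blocks[of "\<lambda>l. \<not> X l j" for j] by simp
qed

lemma accurate_dp_bits_dup_rows:
  assumes q: "accurate_dp_bits n d q \<epsilon> \<delta>" and m: "1 \<le> m" and n1: "n \<le> n' * m" and n2: "(n' - 1) * m < n"
    and eps: "0 \<le> \<epsilon>" and delta: "0 \<le> \<delta>"
  shows "accurate_dp_bits n' d (\<lambda>X. q (dup_rows n m X)) (real m * \<epsilon>) (real m * exp (real m * \<epsilon>) * \<delta>)"
  unfolding accurate_dp_bits_def
proof (intro conjI ballI allI impI)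
  fix X u assume "X \<in> datasets n' d" "u \<in> bitvecs d"
  then show "0 \<le> q (dup_rows n m X) u" using q dup_rows_datasets unfolding accurate_dp_bits_def by blast
next
  fix X assume "X \<in> datasets n' d"
  then show "sum (q (dup_rows n m X)) (bitvecs d) = 1" using q dup_rows_datasets unfolding accurate_dp_bits_def by blast
next
  fix X assume "X \<in> datasets n' d"
  then show "(\<Sum>u\<in>bitvecs d. q (dup_rows n m X) u * real (const_col_errors n' d X u)) \<le> real d * (26/75)"
    using q dup_rows_datasets const_col_errors_dup_rows[OF m n1 n2] unfolding accurate_dp_bits_def
    by (metis (no_types, lifting) sum.cong)
next
  fix X X' R assume nb: "neighbors n' d X X'" and R: "R \<subseteq> bitvecs d"
  obtain l where l: "\<forall>i'. i' \<noteq> l \<longrightarrow> (\<forall>j. X i' j = X' i' j)" and X: "X \<in> datasets n' d" "X' \<in> datasets n' d"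
    using nb unfolding neighbors_def by blast
  define L where "L = {i. i < n \<and> i div m = l}"
  have card_L: "card L \<le> m" unfolding L_def by (rule card_div_eq_le) (use m in simp)
  have S0: "0 \<le> sum (q (dup_rows n m X')) R"
    using q dup_rows_datasets[OF X(2)] R unfolding accurate_dp_bits_def by (intro sum_nonneg) blast
  have e: "exp (real (card L) * \<epsilon>) \<le> exp (real m * \<epsilon>)" using card_L eps by (simp add: mult_right_mono)
  have "sum (q (dup_rows n m X)) R \<le> exp (real (card L) * \<epsilon>) * sum (q (dup_rows n m X')) R
      + real (card L) * exp (real (card L) * \<epsilon>) * \<delta>"
    using l by (intro group_privacy[OF q eps delta _ _ dup_rows_datasets[OF X(1)] dup_rows_datasets[OF X(2)] _ R])
      (auto simp: L_def dup_rows_def)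
  also have "\<dots> \<le> exp (real m * \<epsilon>) * sum (q (dup_rows n m X')) R + real m * exp (real m * \<epsilon>) * \<delta>"
    using e S0 card_L delta by (intro add_mono mult_right_mono mult_mono) auto
  finally show "sum (q (dup_rows n m X)) R \<le> exp (real m * \<epsilon>) * sum (q (dup_rows n m X')) R + real m * exp (real m * \<epsilon>) * \<delta>" .
qed

lemma no_accurate_dp_bits_blocks:
  assumes q: "accurate_dp_bits n d q \<epsilon> \<delta>" and eps: "0 \<le> \<epsilon>" and delta: "0 \<le> \<delta>"
    and m: "1 \<le> m" "m \<le> n" "real m * \<epsilon> \<le> 1" and d: "1 \<le> d" and n': "n' = (n + m - 1) div m"
    and "1000 * real n' * (real m * \<epsilon>) \<le> sqrt (real d)"
    and "1000 * real n' * (real m * exp (real m * \<epsilon>) * \<delta>) \<le> 1"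
    and "60000 * real n' \<le> real d"
  shows False
proof -
  have "n' * m \<le> n + m - 1" unfolding n' by (rule div_times_less_eq_dividend)
  moreover have "n + m - 1 < n' * m + m"
    unfolding n' using m by (metis add.commute div_mult_mod_eq mod_less_divisor nat_add_left_cancel_less
        zero_less_one less_le_trans)
  ultimately have n1: "n \<le> n' * m" and n2: "(n' - 1) * m < n"
    using m by (auto simp: diff_mult_distrib)
  have "1 \<le> n'" using n1 m by (cases n') auto
  then show False
    using no_accurate_dp_bits[OF accurate_dp_bits_dup_rows[OF q m(1) n1 n2 eps delta]] assms(9-11) eps delta m d
    by (simp add: mult_nonneg_nonneg)
qed

definition threshold_event :: "real \<Rightarrow> nat \<Rightarrow> (nat \<Rightarrow> bool) \<Rightarrow> (nat \<Rightarrow> real) set" where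
  "threshold_event \<alpha> d u = {a \<in> space (out_space d). \<forall>j<d. (\<alpha> < a j) = u j}"

definition threshold_prob ::
  "((nat \<Rightarrow> nat \<Rightarrow> bool) \<Rightarrow> (nat \<Rightarrow> real) measure) \<Rightarrow> real \<Rightarrow> nat \<Rightarrow> (nat \<Rightarrow> nat \<Rightarrow> bool) \<Rightarrow> (nat \<Rightarrow> bool) \<Rightarrow> real"
  where "threshold_prob M \<alpha> d Y u = measure (M Y) (threshold_event \<alpha> d u)"

lemma threshold_event_sets: "threshold_event \<alpha> d u \<in> sets (out_space d)"
proof -
  have "threshold_event \<alpha> d u =
      {a \<in> space (out_space d). \<forall>j\<in>{..<d}. (u j \<longrightarrow> \<alpha> < a j) \<and> (\<not> u j \<longrightarrow> a j \<le> \<alpha>)}"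
    unfolding threshold_event_def by (auto; meson lessThan_iff not_le)
  also have "\<dots> \<in> sets (out_space d)"
    unfolding out_space_def by measurable
  finally show ?thesis .
qed

lemma threshold_event_disjoint: "disjoint_family_on (threshold_event \<alpha> d) (bitvecs d)"
  unfolding disjoint_family_on_def
proof (intro ballI impI)
  fix u u' assume "u \<in> bitvecs d" "u' \<in> bitvecs d" "u \<noteq> u'"
  then obtain j where "j < d" "u j \<noteq> u' j"
    by (auto simp: bitvecs_def PiE_def extensional_def fun_eq_iff)
  then show "threshold_event \<alpha> d u \<inter> threshold_event \<alpha> d u' = {}" by (auto simp: threshold_event_def)
qed

lemma threshold_event_rounding:
  "a \<in> space (out_space d) \<Longrightarrow> a \<in> threshold_event \<alpha> d (restrict (\<lambda>j. \<alpha> < a j) {..<d})"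
  by (simp add: threshold_event_def)

lemma threshold_event_cover: "(\<Union>u\<in>bitvecs d. threshold_event \<alpha> d u) = space (out_space d)"
proof
  show "space (out_space d) \<subseteq> (\<Union>u\<in>bitvecs d. threshold_event \<alpha> d u)"
  proof
    fix a assume "a \<in> space (out_space d)"
    then have "a \<in> threshold_event \<alpha> d (restrict (\<lambda>j. \<alpha> < a j) {..<d})" by (rule threshold_event_rounding)
    moreover have "restrict (\<lambda>j. \<alpha> < a j) {..<d} \<in> bitvecs d" by (simp add: bitvecs_def)
    ultimately show "a \<in> (\<Union>u\<in>bitvecs d. threshold_event \<alpha> d u)" by blast
  qed
qed (auto simp: threshold_event_def)

lemma UN_threshold_event_sets: "R \<subseteq> bitvecs d \<Longrightarrow> (\<Union>u\<in>R. threshold_event \<alpha> d u) \<in> sets (out_space d)"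
  using finite_subset[OF _ finite_bitvecs] threshold_event_sets by (intro sets.finite_UN) blast+

lemma sum_threshold_prob:
  assumes mech: "is_mechanism n d M" and Y: "Y \<in> datasets n d" and R: "R \<subseteq> bitvecs d"
  shows "sum (threshold_prob M \<alpha> d Y) R = measure (M Y) (\<Union>u\<in>R. threshold_event \<alpha> d u)"
proof -
  have P: "prob_space (M Y)" and S: "sets (M Y) = sets (out_space d)"
    using mech Y by (auto simp: is_mechanism_def)
  have "measure (M Y) (\<Union>u\<in>R. threshold_event \<alpha> d u) = (\<Sum>u\<in>R. measure (M Y) (threshold_event \<alpha> d u))"
    by (rule finite_measure.finite_measure_finite_Union[OF prob_space.finite_measure[OF P]])
       (use finite_subset[OF R] threshold_event_sets S disjoint_family_on_mono[OF R threshold_event_disjoint] in auto)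
  then show ?thesis by (simp add: threshold_prob_def)
qed

lemma sum_threshold_prob_eq_1:
  assumes mech: "is_mechanism n d M" and Y: "Y \<in> datasets n d"
  shows "sum (threshold_prob M \<alpha> d Y) (bitvecs d) = 1"
proof -
  have P: "prob_space (M Y)" and S: "sets (M Y) = sets (out_space d)"
    using mech Y by (auto simp: is_mechanism_def)
  then show ?thesis
    using sum_threshold_prob[OF mech Y order_refl] threshold_event_cover prob_space.prob_space[OF P]
    by (simp add: sets_eq_imp_space_eq[OF S])
qed

text \<open>Since \<open>\<eta> \<alpha> < 1/2\<close>, an accurate estimate of a constant column lies on the correct side
  of \<open>\<alpha>\<close>.\<close>

lemma const_col_errors_threshold_le:
  assumes n: "1 \<le> n" and eta: "1 \<le> \<eta>" and \<alpha>: "\<eta> * \<alpha> < 1/2"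
    and acc: "output_accurate n d \<eta> \<alpha> \<beta> Y a" and \<beta>: "\<beta> \<le> 1/75"
  shows "real (const_col_errors n d Y (restrict (\<lambda>j. \<alpha> < a j) {..<d})) \<le> real d / 75"
proof -
  define Acc where
    "Acc = {j\<in>{..<d}. (1/\<eta>) * col_mean n Y j - \<alpha> \<le> a j \<and> a j \<le> \<eta> * col_mean n Y j + \<alpha>}"
  define E where "E = {j\<in>{..<d}. ((\<forall>i<n. Y i j) \<and> \<not> restrict (\<lambda>j. \<alpha> < a j) {..<d} j)
      \<or> ((\<forall>i<n. \<not> Y i j) \<and> restrict (\<lambda>j. \<alpha> < a j) {..<d} j)}"
  have "(1 - 1/75) * real d \<le> (1 - \<beta>) * real d" using \<beta> by (intro mult_right_mono) auto
  also have "\<dots> \<le> real (card Acc)" using acc by (simp add: output_accurate_def Acc_def)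
  finally have card_Acc: "(1 - 1/75) * real d \<le> real (card Acc)" .
  have "2 * \<alpha> < 1 / \<eta>" using eta \<alpha> by (simp add: field_simps)
  moreover have "col_mean n Y j = 1" if "\<forall>i<n. Y i j" for j
    using that n by (simp add: col_mean_def)
  moreover have "col_mean n Y j = 0" if "\<forall>i<n. \<not> Y i j" for j
    using that by (simp add: col_mean_def)
  ultimately have "E \<subseteq> {..<d} - Acc"
    by (auto simp: E_def Acc_def)
  then have "card E \<le> card ({..<d} - Acc)" by (intro card_mono) auto
  also have "card ({..<d} - Acc) = d - card Acc" by (subst card_Diff_subset) (auto simp: Acc_def)
  finally have "card E \<le> d - card Acc" .
  moreover have "card Acc \<le> d" using card_mono[of "{..<d}" Acc] by (auto simp: Acc_def)
  ultimately have "real (card E) \<le> real d - real (card Acc)" by linarith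
  then show ?thesis using card_Acc by (simp add: const_col_errors_def E_def)
qed

lemma expected_errors_le:
  fixes q E :: "'u \<Rightarrow> real"
  assumes "finite U" "\<And>u. u \<in> U \<Longrightarrow> 0 \<le> q u" "sum q U = 1"
    and "0 \<le> D" "\<And>u. u \<in> U \<Longrightarrow> E u \<le> D" and "G \<subseteq> U" "\<And>u. u \<in> G \<Longrightarrow> E u \<le> D / 75" "2/3 \<le> sum q G"
  shows "(\<Sum>u\<in>U. q u * E u) \<le> D * (26/75)"
proof -
  define x where "x = sum q G"
  have rest: "sum q (U - G) = 1 - x"
    using assms(3) sum.subset_diff[OF assms(6,1), of q] by (simp add: x_def)
  have x1: "x \<le> 1" using rest assms(2) sum_nonneg[of "U - G" q] by simp
  have "(\<Sum>u\<in>U. q u * E u) = (\<Sum>u\<in>G. q u * E u) + (\<Sum>u\<in>U - G. q u * E u)"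
    using sum.subset_diff[OF assms(6,1)] by (simp add: add.commute)
  also have "\<dots> \<le> (\<Sum>u\<in>G. q u * (D / 75)) + (\<Sum>u\<in>U - G. q u * D)"
    using assms(2,5-7) by (intro add_mono sum_mono mult_left_mono) auto
  also have "\<dots> = x * (D / 75) + (1 - x) * D"
    using rest unfolding x_def by (simp only: sum_distrib_right[symmetric])
  also have "\<dots> \<le> D * (26/75)"
    using assms(4,8) x1 mult_right_mono[of "2/3" x D] by (simp add: x_def algebra_simps)
  finally show ?thesis .
qed

lemma mechanism_accurate_dp_bits:
  assumes mech: "is_mechanism n d M" and dp: "differentially_private n d \<epsilon> \<delta> M"
    and acc: "mechanism_accurate n d \<eta> \<alpha> \<beta> M" and \<beta>: "\<beta> \<le> 1/75"
    and n: "1 \<le> n" and eta: "1 \<le> \<eta>" and \<alpha>: "\<eta> * \<alpha> < 1/2"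
  shows "accurate_dp_bits n d (threshold_prob M \<alpha> d) \<epsilon> (max \<delta> 0)"
  unfolding accurate_dp_bits_def
proof (intro conjI ballI allI impI)
  fix Y u show "0 \<le> threshold_prob M \<alpha> d Y u" by (simp add: threshold_prob_def)
next
  fix Y assume "Y \<in> datasets n d"
  then show "sum (threshold_prob M \<alpha> d Y) (bitvecs d) = 1" by (rule sum_threshold_prob_eq_1[OF mech])
next
  fix Y Y' R assume nb: "neighbors n d Y Y'" and R: "R \<subseteq> bitvecs d"
  have Y: "Y \<in> datasets n d" "Y' \<in> datasets n d" using nb by (auto simp: neighbors_def)
  have "measure (M Y) (\<Union>u\<in>R. threshold_event \<alpha> d u) \<le> exp \<epsilon> * measure (M Y') (\<Union>u\<in>R. threshold_event \<alpha> d u) + \<delta>"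
    using dp nb UN_threshold_event_sets[OF R] unfolding differentially_private_def by blast
  then show "sum (threshold_prob M \<alpha> d Y) R \<le> exp \<epsilon> * sum (threshold_prob M \<alpha> d Y') R + max \<delta> 0"
    using sum_threshold_prob[OF mech Y(1) R] sum_threshold_prob[OF mech Y(2) R] by simp
next
  fix Y assume Y: "Y \<in> datasets n d"
  have P: "prob_space (M Y)" and S: "sets (M Y) = sets (out_space d)"
    using mech Y by (auto simp: is_mechanism_def)
  define G where "G = {u\<in>bitvecs d. real (const_col_errors n d Y u) \<le> real d / 75}"
  have G: "G \<subseteq> bitvecs d" by (auto simp: G_def)
  have "2/3 \<le> measure (M Y) {a \<in> space (M Y). output_accurate n d \<eta> \<alpha> \<beta> Y a}"
    using acc Y unfolding mechanism_accurate_def by blast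
  also have "\<dots> \<le> measure (M Y) (\<Union>u\<in>G. threshold_event \<alpha> d u)"
  proof (rule finite_measure.finite_measure_mono[OF prob_space.finite_measure[OF P]])
    show "(\<Union>u\<in>G. threshold_event \<alpha> d u) \<in> sets (M Y)" using UN_threshold_event_sets[OF G] S by simp
    show "{a \<in> space (M Y). output_accurate n d \<eta> \<alpha> \<beta> Y a} \<subseteq> (\<Union>u\<in>G. threshold_event \<alpha> d u)"
    proof
      fix a assume a: "a \<in> {a \<in> space (M Y). output_accurate n d \<eta> \<alpha> \<beta> Y a}"
      define u where "u = restrict (\<lambda>j. \<alpha> < a j) {..<d}"
      have "u \<in> G"
        unfolding G_def u_def using const_col_errors_threshold_le[OF n eta \<alpha> _ \<beta>] a by (simp add: bitvecs_def)
      moreover have "a \<in> threshold_event \<alpha> d u"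
        using a threshold_event_rounding sets_eq_imp_space_eq[OF S] by (simp add: u_def)
      ultimately show "a \<in> (\<Union>u\<in>G. threshold_event \<alpha> d u)" by blast
    qed
  qed
  also have "\<dots> = sum (threshold_prob M \<alpha> d Y) G" using sum_threshold_prob[OF mech Y G] by simp
  finally have good: "2/3 \<le> sum (threshold_prob M \<alpha> d Y) G" .
  show "(\<Sum>u\<in>bitvecs d. threshold_prob M \<alpha> d Y u * real (const_col_errors n d Y u)) \<le> real d * (26/75)"
    by (rule expected_errors_le[OF finite_bitvecs _ sum_threshold_prob_eq_1[OF mech Y] _ _ G _ good])
      (auto simp: threshold_prob_def G_def const_col_errors_le)
qed

text \<open>The block size \<open>m \<approx> min n (1/\<epsilon>)\<close> brings the privacy parameter up to a constant while
  keeping \<open>\<lceil>n/m\<rceil> \<le> max 1 (4 n \<epsilon>)\<close> rows.\<close>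

lemma block_size_exists:
  fixes \<epsilon> :: real
  assumes \<epsilon>: "0 < \<epsilon>" "\<epsilon> \<le> 1" and n: "1 \<le> n"
  obtains m where "1 \<le> m" "m \<le> n" "real m * \<epsilon> \<le> 1"
    "real ((n + m - 1) div m) * real m \<le> 2 * real n"
    "real ((n + m - 1) div m) \<le> max 1 (4 * (real n * \<epsilon>))"
proof (cases "real n * \<epsilon> \<le> 1")
  case True
  have "(n + n - 1) div n = 1" using n by (intro div_nat_eqI) auto
  then show ?thesis using True n by (intro that[of n]) auto
next
  case False
  define m where "m = nat \<lfloor>1 / \<epsilon>\<rfloor>"
  have "1 \<le> 1 / \<epsilon>" using \<epsilon> by simp
  then have m: "1 \<le> m" "real m \<le> 1 / \<epsilon>" "1 / \<epsilon> < real m + 1"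
    unfolding m_def by linarith+
  have m_eps: "real m * \<epsilon> \<le> 1" using m(2) \<epsilon> by (simp add: field_simps)
  have "1 / \<epsilon> < real n" using False \<epsilon> by (simp add: field_simps)
  then have "m < n" using m(2) by linarith
  have "1 < (real m + 1) * \<epsilon>" using m(3) \<epsilon> by (simp add: field_simps)
  also have "\<dots> \<le> 2 * (real m * \<epsilon>)" using m(1) \<epsilon> by (simp add: algebra_simps)
  finally have two_m_eps: "1 < 2 * (real m * \<epsilon>)" .
  define n' where "n' = (n + m - 1) div m"
  have "n' * m \<le> n + m - 1" unfolding n'_def by (rule div_times_less_eq_dividend)
  then have n'm: "real n' * real m \<le> 2 * real n" using \<open>m < n\<close> by (simp flip: of_nat_mult)
  have "real n' \<le> real n' * (2 * (real m * \<epsilon>))" using two_m_eps by (simp add: mult_le_cancel_left1)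
  also have "\<dots> = 2 * \<epsilon> * (real n' * real m)" by simp
  also have "\<dots> \<le> 2 * \<epsilon> * (2 * real n)" using n'm \<epsilon> by (intro mult_left_mono) auto
  finally have "real n' \<le> max 1 (4 * (real n * \<epsilon>))" by (simp add: mult.commute)
  then show ?thesis using m(1) \<open>m < n\<close> m_eps n'm by (intro that[of m]) (auto simp: n'_def)
qed

definition sample_bound :: "nat \<Rightarrow> real \<Rightarrow> real" where
  "sample_bound d \<epsilon> = (if 1000000 \<le> d then sqrt (real d) / (2000 * \<epsilon>) else 0)"

lemma sample_bound_Theta:
  assumes "1000000 \<le> d" "0 < \<epsilon>"
  shows "sqrt (real d) / (2000 * \<epsilon> * (ln (real d + 2)) ^ 0) \<le> sample_bound d \<epsilon>"
    and "sample_bound d \<epsilon> \<le> 2000 * sqrt (real d) * (ln (real d + 2)) ^ 0 / \<epsilon>"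
  using assms by (simp_all add: sample_bound_def field_simps)

text \<open>The hypothesis on \<open>\<delta>\<close> does not make it nonnegative; a negative \<open>\<delta>\<close> is replaced by \<open>0\<close>.\<close>

lemma no_accurate_mechanism:
  assumes \<epsilon>: "0 < \<epsilon>" "\<epsilon> \<le> 1" and n: "1 \<le> n" "real n \<le> sample_bound d \<epsilon>"
    and \<eta>: "1 \<le> \<eta>" and \<alpha>: "\<eta> * \<alpha> < 1/2" and \<delta>: "\<delta> \<le> (1/6000) / real n"
    and mech: "is_mechanism n d M" and dp: "differentially_private n d \<epsilon> \<delta> M" and \<beta>: "\<beta> \<le> 1/75"
  shows "\<not> mechanism_accurate n d \<eta> \<alpha> \<beta> M"
proof
  assume acc: "mechanism_accurate n d \<eta> \<alpha> \<beta> M"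
  have d: "1000000 \<le> d" using n by (cases "1000000 \<le> d") (auto simp: sample_bound_def)
  define s where "s = sqrt (real d)"
  have s: "1000 \<le> s" unfolding s_def by (rule real_le_rsqrt) (use d in simp)
  have "real n * \<epsilon> \<le> s / (2000 * \<epsilon>) * \<epsilon>"
    using n d \<epsilon> by (intro mult_right_mono) (auto simp: sample_bound_def s_def)
  then have n_eps: "real n * \<epsilon> \<le> s / 2000" using \<epsilon> by simp
  define \<delta>' where "\<delta>' = max \<delta> 0"
  have "real n * \<delta>' \<le> real n * ((1/6000) / real n)" using \<delta> n by (intro mult_left_mono) (auto simp: \<delta>'_def)
  then have n_delta: "real n * \<delta>' \<le> 1/6000" using n by simp
  obtain m where m: "1 \<le> m" "m \<le> n" "real m * \<epsilon> \<le> 1"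
    and n'm: "real ((n + m - 1) div m) * real m \<le> 2 * real n"
    and n': "real ((n + m - 1) div m) \<le> max 1 (4 * (real n * \<epsilon>))"
    using block_size_exists[OF \<epsilon> n(1)] .
  define n' where "n' = (n + m - 1) div m"
  have exp_le: "exp (real m * \<epsilon>) \<le> 3" using m(3) exp_le by (smt (verit) exp_mono)
  show False
  proof (rule no_accurate_dp_bits_blocks[OF mechanism_accurate_dp_bits[OF mech dp acc \<beta> n(1) \<eta> \<alpha>, folded \<delta>'_def]
        _ _ m _ n'_def])
    have "1000 * real n' * (real m * \<epsilon>) = 1000 * \<epsilon> * (real n' * real m)" by simp
    also have "\<dots> \<le> 1000 * \<epsilon> * (2 * real n)" using n'm \<epsilon> by (intro mult_left_mono) (auto simp: n'_def)
    also have "\<dots> \<le> sqrt (real d)" using n_eps by (simp add: s_def mult.commute)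
    finally show "1000 * real n' * (real m * \<epsilon>) \<le> sqrt (real d)" .
    have "1000 * real n' * (real m * exp (real m * \<epsilon>) * \<delta>') = 1000 * exp (real m * \<epsilon>) * ((real n' * real m) * \<delta>')"
      by simp
    also have "\<dots> \<le> 1000 * 3 * ((2 * real n) * \<delta>')"
    proof -
      have "(real n' * real m) * \<delta>' \<le> (2 * real n) * \<delta>'"
        using n'm by (intro mult_right_mono) (auto simp: n'_def \<delta>'_def)
      then have "exp (real m * \<epsilon>) * ((real n' * real m) * \<delta>') \<le> 3 * ((2 * real n) * \<delta>')"
        by (rule mult_mono[OF exp_le]) (auto simp: \<delta>'_def)
      then show ?thesis by (simp add: mult_ac)
    qed
    also have "\<dots> \<le> 1" using n_delta by simp
    finally show "1000 * real n' * (real m * exp (real m * \<epsilon>) * \<delta>') \<le> 1" .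
    have "120 * s \<le> s * s" using s by (intro mult_right_mono) auto
    then show "60000 * real n' \<le> real d"
      using n' n_eps d by (simp add: n'_def s_def max_def split: if_splits)
  qed (use \<epsilon> d in \<open>auto simp: \<delta>'_def\<close>)
qed

theorem mainTheorem11:
  shows "\<exists>c::real. c > 0 \<and> (\<exists>N :: nat \<Rightarrow> real \<Rightarrow> real.
     (\<exists>C::real. \<exists>k::nat. \<exists>d0::nat. C > 0 \<and>
        (\<forall>d\<ge>d0. \<forall>\<epsilon>. 0 < \<epsilon> \<and> \<epsilon> \<le> 1 \<longrightarrow>
           sqrt (real d) / (C * \<epsilon> * (ln (real d + 2)) ^ k) \<le> N d \<epsilon> \<and>
           N d \<epsilon> \<le> C * sqrt (real d) * (ln (real d + 2)) ^ k / \<epsilon>)) \<and>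
     (\<forall>d \<epsilon> n \<eta> \<alpha> \<delta> M. 0 < \<epsilon> \<and> \<epsilon> \<le> 1 \<and> 1 \<le> n \<and> real n \<le> N d \<epsilon> \<and>
        1 \<le> \<eta> \<and> 0 \<le> \<alpha> \<and> \<alpha> \<le> 1 \<and> \<eta> * \<alpha> < 1/2 \<and> \<delta> \<le> c / real n \<and>
        is_mechanism n d M \<and> differentially_private n d \<epsilon> \<delta> M \<longrightarrow>
          \<not> mechanism_accurate n d \<eta> \<alpha> (1/75) M \<and> \<not> mechanism_accurate n d \<eta> \<alpha> 0 M))"
proof (rule exI[of _ "1/6000"], intro conjI exI[of _ sample_bound])
  show "(0::real) < 1/6000" by simp
  show "\<exists>C::real. \<exists>k::nat. \<exists>d0::nat. C > 0 \<and>
      (\<forall>d\<ge>d0. \<forall>\<epsilon>. 0 < \<epsilon> \<and> \<epsilon> \<le> 1 \<longrightarrow>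
         sqrt (real d) / (C * \<epsilon> * (ln (real d + 2)) ^ k) \<le> sample_bound d \<epsilon> \<and>
         sample_bound d \<epsilon> \<le> C * sqrt (real d) * (ln (real d + 2)) ^ k / \<epsilon>)"
    using sample_bound_Theta by (intro exI[of _ 2000] exI[of _ 0] exI[of _ 1000000]) auto
qed (intro allI impI conjI; elim conjE; rule no_accurate_mechanism; (assumption | simp))

end
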